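(* For all $\tilde\alpha\ge0$, $-1<\tilde\beta\le0$ and $e\in[0,1)$, $$\phi_{-1}(\tilde{\mathcal A}(\tilde\alpha,\tilde\beta,e))\le2,\qquad \nu_{-1}(\tilde{\mathcal A}(\tilde\alpha,\tilde\beta,e))\le2.$$ Moreover, for given $e_0\in[0,1)$, if $\tilde\alpha>\frac14+\frac54e_0$ and $-1<\tilde\beta\le0$, then $\phi_{-1}(\tilde{\mathcal A}(\tilde\alpha,\tilde\beta,e_0))=0$ and $\nu_{-1}(\tilde{\mathcal A}(\tilde\alpha,\tilde\beta,e_0))=0$.
   Context: $R(t)$ is the rotation matrix by angle $t$. For $\alpha,\beta\in\mathbf R$, $e\in[0,1)$, $\mathcal A(\alpha,\beta,e)=-\frac{d^2}{dt^2}I_2-I_2+\frac{1}{1+e\cos t}R(t)\mathrm{diag}(1+\alpha+3\beta,1+\alpha-3\beta)R(t)^T$, self-adjoint on $L^2([0,2\pi],\mathbf C^2)$ with domain $\{y\in W^{2,2}([0,2\pi],\mathbf C^2):y(2\pi)=-y(0),y'(2\pi)=-y'(0)\}$ (the case $\omega=-1$); $\phi_{-1}$ is its Morse index (total multiplicity of negative eigenvalues) and $\nu_{-1}=\dim\ker$. $\tilde\alpha=\alpha-\beta$, $\tilde\beta=-\alpha+3\beta-1$, $\tilde{\mathcal A}(\tilde\alpha,\tilde\beta,e):=\mathcal A(\alpha,\beta,e)$. *)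

theory Defs
  imports "HOL-Analysis.Analysis" "HOL-Library.Extended_Nat"
begin

text \<open>Functions y : [0,2pi] -> C^2 are represented as y :: real => complex * complex,
  normalised to vanish outside [0,2pi].\<close>

text \<open>Potential term (1/(1+e cos t)) R(t) diag(1+a+3b, 1+a-3b) R(t)^T applied to v.\<close>
definition pot :: "real \<Rightarrow> real \<Rightarrow> real \<Rightarrow> real \<Rightarrow> complex \<times> complex \<Rightarrow> complex \<times> complex" where
  "pot \<alpha> \<beta> e t v =
     (let a = 1 + \<alpha> + 3 * \<beta>; b = 1 + \<alpha> - 3 * \<beta>; c = cos t; s = sin t;
          k = 1 / (1 + e * c)
      in (complex_of_real (k * (a * c^2 + b * s^2)) * fst v
            + complex_of_real (k * (a - b) * c * s) * snd v,
          complex_of_real (k * (a - b) * c * s) * fst v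
            + complex_of_real (k * (a * s^2 + b * c^2)) * snd v))"

text \<open>y lies in the domain of A(alpha,beta,e) (omega = -1 boundary conditions) and
  A y = lam y.\<close>
definition is_eigfun :: "real \<Rightarrow> real \<Rightarrow> real \<Rightarrow> real \<Rightarrow> (real \<Rightarrow> complex \<times> complex) \<Rightarrow> bool" where
  "is_eigfun \<alpha> \<beta> e lam y \<longleftrightarrow>
     (\<forall>t. t \<notin> {0..2*pi} \<longrightarrow> y t = 0) \<and>
     (\<exists>y' y''.
        (\<forall>t\<in>{0..2*pi}. (y has_vector_derivative y' t) (at t within {0..2*pi}) \<and>
                        (y' has_vector_derivative y'' t) (at t within {0..2*pi})) \<and>
        y (2*pi) = - y 0 \<and> y' (2*pi) = - y' 0 \<and>
        (\<forall>t\<in>{0..2*pi}. - y'' t - y t + pot \<alpha> \<beta> e t (y t) = lam *\<^sub>R y t))"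

definition cindep :: "nat \<Rightarrow> (nat \<Rightarrow> real \<Rightarrow> complex \<times> complex) \<Rightarrow> bool" where
  "cindep n ys \<longleftrightarrow>
     (\<forall>c :: nat \<Rightarrow> complex.
        (\<forall>t. (\<Sum>i<n. c i * fst (ys i t)) = 0 \<and> (\<Sum>i<n. c i * snd (ys i t)) = 0)
        \<longrightarrow> (\<forall>i<n. c i = 0))"

text \<open>Morse index: total multiplicity of negative eigenvalues, i.e. the complex dimension
  of the span of all eigenfunctions with negative eigenvalue.\<close>
definition morse_index :: "real \<Rightarrow> real \<Rightarrow> real \<Rightarrow> enat" where
  "morse_index \<alpha> \<beta> e =
     Sup {enat n | n. \<exists>ys. (\<forall>i<n. \<exists>lam<0. is_eigfun \<alpha> \<beta> e lam (ys i)) \<and> cindep n ys}"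

definition nullity :: "real \<Rightarrow> real \<Rightarrow> real \<Rightarrow> enat" where
  "nullity \<alpha> \<beta> e =
     Sup {enat n | n. \<exists>ys. (\<forall>i<n. is_eigfun \<alpha> \<beta> e 0 (ys i)) \<and> cindep n ys}"

text \<open>Tilde parameters: at = a - b, bt = -a + 3b - 1, i.e.
  a = (3 a_t + b_t + 1)/2, b = (a_t + b_t + 1)/2.\<close>
definition morse_index_t :: "real \<Rightarrow> real \<Rightarrow> real \<Rightarrow> enat" where
  "morse_index_t a_t b_t e = morse_index ((3*a_t + b_t + 1)/2) ((a_t + b_t + 1)/2) e"

definition nullity_t :: "real \<Rightarrow> real \<Rightarrow> real \<Rightarrow> enat" where
  "nullity_t a_t b_t e = nullity ((3*a_t + b_t + 1)/2) ((a_t + b_t + 1)/2) e"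

end

theory Submission
  imports Defs
begin

text \<open>In the frame rotating with the principal axes of the potential, the quadratic form of \<open>\<A>\<close>
  splits into a square, a radial part, nonnegative by Picone's identity with the nowhere vanishing
  solution \<open>1 + e cos t\<close>, and a tangential part that involves only the first rotating coordinate
  \<open>z1\<close>. If the first component of \<open>y\<close> vanishes at \<open>0\<close> and \<open>\<pi>\<close>, so does \<open>z1\<close>, and Picone's identity
  with \<open>sin t (1 + e cos t)\<close> on \<open>[0, \<pi>]\<close> and \<open>[\<pi>, 2\<pi>]\<close> makes the tangential part nonnegative; for
  \<open>a_t > 1/4 + 5e/4\<close> Wirtinger's inequality for antiperiodic functions makes it positive without any
  boundary condition. As the form is nonpositive on the span of the eigenfunctions with eigenvalue
  \<open>\<le> 0\<close>, that span meets the codimension-two subspace \<open>{y\<^sub>1(0) = y\<^sub>1(\<pi>) = 0}\<close> only in \<open>0\<close>; so it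
  has dimension at most \<open>2\<close>, and dimension \<open>0\<close> when \<open>a_t > 1/4 + 5e/4\<close>.\<close>

section \<open>Picone's identity\<close>

lemma tendsto_quotient_at_common_zero:
  fixes f \<phi> :: "real \<Rightarrow> real"
  assumes f: "(f has_real_derivative f') (at x within S)"
    and \<phi>: "(\<phi> has_real_derivative \<phi>') (at x within S)"
    and zero: "f x = 0" "\<phi> x = 0" and "\<phi>' \<noteq> 0"
  shows "((\<lambda>t. f t / \<phi> t) \<longlongrightarrow> f' / \<phi>') (at x within S)"
proof -
  have "((\<lambda>t. ((f t - f x) / (t - x)) / ((\<phi> t - \<phi> x) / (t - x))) \<longlongrightarrow> f' / \<phi>') (at x within S)"
    using f \<phi> \<open>\<phi>' \<noteq> 0\<close> by (intro tendsto_divide) (auto simp: has_field_derivative_iff)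
  moreover have "\<forall>\<^sub>F t in at x within S.
      ((f t - f x) / (t - x)) / ((\<phi> t - \<phi> x) / (t - x)) = f t / \<phi> t"
    unfolding eventually_at_filter using zero by (auto intro!: always_eventually)
  ultimately show ?thesis
    using tendsto_cong by fastforce
qed

text \<open>At an endpoint where \<open>\<phi>\<close> vanishes so does \<open>f\<close>, and the boundary term there is \<open>0\<close>
  (as \<open>x / 0 = 0\<close>), which is its limit value.\<close>
lemma continuous_on_picone_boundary_term:
  fixes f f' \<phi> \<phi>' :: "real \<Rightarrow> real"
  assumes \<phi>': "\<And>t. (\<phi> has_real_derivative \<phi>' t) (at t)" and \<phi>'_cont: "\<And>t. isCont \<phi>' t"
    and \<phi>_nz: "\<And>t. t \<in> {a<..<b} \<Longrightarrow> \<phi> t \<noteq> 0"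
    and at_a: "\<phi> a = 0 \<Longrightarrow> f a = 0 \<and> \<phi>' a \<noteq> 0"
    and at_b: "\<phi> b = 0 \<Longrightarrow> f b = 0 \<and> \<phi>' b \<noteq> 0"
    and f': "\<And>t. t \<in> {a..b} \<Longrightarrow> (f has_real_derivative f' t) (at t within {a..b})"
  shows "continuous_on {a..b} (\<lambda>t. \<phi>' t / \<phi> t * (f t)^2)"
  unfolding continuous_on_def
proof
  fix x assume x: "x \<in> {a..b}"
  have f_lim: "(f \<longlongrightarrow> f x) (at x within {a..b})"
    using DERIV_continuous_on[OF f'] x by (simp add: continuous_on_def)
  have zero_end: "f x = 0 \<and> \<phi>' x \<noteq> 0" if "\<phi> x = 0"
  proof -
    have "x = a \<or> x = b"
      using x \<phi>_nz that by force
    then show ?thesis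
      using that at_a at_b by auto
  qed
  have \<phi>'_lim: "(\<phi>' \<longlongrightarrow> \<phi>' x) (at x within {a..b})"
    using \<phi>'_cont by (rule isCont_tendsto_compose) (rule tendsto_ident_at)
  have quotient: "((\<lambda>t. f t / \<phi> t) \<longlongrightarrow> (if \<phi> x = 0 then f' x / \<phi>' x else f x / \<phi> x))
      (at x within {a..b})"
  proof (cases "\<phi> x = 0")
    case True
    then show ?thesis
      using f'[OF x] has_field_derivative_at_within[OF \<phi>'] zero_end[OF True]
      by (simp add: tendsto_quotient_at_common_zero)
  next
    case False
    have "(\<phi> \<longlongrightarrow> \<phi> x) (at x within {a..b})"
      using DERIV_isCont[OF \<phi>'] by (rule isCont_tendsto_compose) (rule tendsto_ident_at)
    then show ?thesis
      using f_lim False by (simp add: tendsto_divide)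
  qed
  have limit_value: "\<phi>' x * (if \<phi> x = 0 then f' x / \<phi>' x else f x / \<phi> x) * f x
      = \<phi>' x / \<phi> x * (f x)^2"
    using zero_end by (cases "\<phi> x = 0") (auto simp: power2_eq_square)
  have "(\<lambda>t. \<phi>' t / \<phi> t * (f t)^2) = (\<lambda>t. \<phi>' t * (f t / \<phi> t) * f t)"
    by (simp add: fun_eq_iff power2_eq_square)
  then show "((\<lambda>t. \<phi>' t / \<phi> t * (f t)^2) \<longlongrightarrow> \<phi>' x / \<phi> x * (f x)^2) (at x within {a..b})"
    unfolding limit_value[symmetric] using tendsto_mult[OF tendsto_mult[OF \<phi>'_lim quotient] f_lim]
    by simp
qed

lemma picone_has_integral:
  fixes f f' \<phi> \<phi>' \<phi>'' V :: "real \<Rightarrow> real"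
  assumes "a \<le> b"
    and \<phi>': "\<And>t. (\<phi> has_real_derivative \<phi>' t) (at t)"
    and \<phi>'': "\<And>t. (\<phi>' has_real_derivative \<phi>'' t) (at t)"
    and \<phi>_eq: "\<And>t. t \<in> {a..b} \<Longrightarrow> \<phi>'' t = V t * \<phi> t"
    and V_cont: "continuous_on {a..b} V"
    and \<phi>_nz: "\<And>t. t \<in> {a<..<b} \<Longrightarrow> \<phi> t \<noteq> 0"
    and at_a: "\<phi> a = 0 \<Longrightarrow> f a = 0 \<and> \<phi>' a \<noteq> 0"
    and at_b: "\<phi> b = 0 \<Longrightarrow> f b = 0 \<and> \<phi>' b \<noteq> 0"
    and f': "\<And>t. t \<in> {a..b} \<Longrightarrow> (f has_real_derivative f' t) (at t within {a..b})"
    and f'_cont: "continuous_on {a..b} f'"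
  shows "((\<lambda>t. (f' t - \<phi>' t / \<phi> t * f t)^2) has_integral
           integral {a..b} (\<lambda>t. (f' t)^2 + V t * (f t)^2)
             - (\<phi>' b / \<phi> b * (f b)^2 - \<phi>' a / \<phi> a * (f a)^2)) {a..b}"
proof -
  define H where "H t = \<phi>' t / \<phi> t * (f t)^2" for t
  define L where "L t = (f' t)^2 + V t * (f t)^2" for t
  have H_cont: "continuous_on {a..b} H"
    unfolding H_def[abs_def] using \<phi>' DERIV_isCont[OF \<phi>''] \<phi>_nz at_a at_b f'
    by (rule continuous_on_picone_boundary_term)
  have H_deriv: "(H has_vector_derivative L t - (f' t - \<phi>' t / \<phi> t * f t)^2) (at t)"
    if t: "t \<in> {a<..<b}" for t
  proof -
    have ft: "(f has_real_derivative f' t) (at t)"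
      using f'[of t] t at_within_interior[of t "{a..b}"] by auto
    have \<phi>t: "\<phi> t \<noteq> 0"
      using \<phi>_nz t by blast
    have "(H has_real_derivative L t - (f' t - \<phi>' t / \<phi> t * f t)^2) (at t)"
      unfolding H_def[abs_def]
      apply (rule derivative_eq_intros ft \<phi>' \<phi>'' \<phi>t refl | simp)+
      using \<phi>_eq[of t] \<phi>t t by (simp add: L_def field_simps power2_eq_square)
    then show ?thesis
      by (simp add: has_real_derivative_iff_has_vector_derivative)
  qed
  have "((\<lambda>t. L t - (f' t - \<phi>' t / \<phi> t * f t)^2) has_integral H b - H a) {a..b}"
    using \<open>a \<le> b\<close> H_cont H_deriv by (rule fundamental_theorem_of_calculus_interior)
  moreover have "(L has_integral integral {a..b} L) {a..b}"
    unfolding L_def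
    by (intro integrable_integral integrable_continuous_real continuous_intros f'_cont V_cont
        DERIV_continuous_on[OF f'])
  ultimately have "((\<lambda>t. L t - (L t - (f' t - \<phi>' t / \<phi> t * f t)^2)) has_integral
      integral {a..b} L - (H b - H a)) {a..b}"
    by (rule has_integral_diff[rotated])
  then show ?thesis
    by (simp add: H_def L_def[abs_def])
qed

lemma picone_inequality:
  fixes f f' \<phi> \<phi>' \<phi>'' V :: "real \<Rightarrow> real"
  assumes "a \<le> b"
    and "\<And>t. (\<phi> has_real_derivative \<phi>' t) (at t)"
    and "\<And>t. (\<phi>' has_real_derivative \<phi>'' t) (at t)"
    and "\<And>t. t \<in> {a..b} \<Longrightarrow> \<phi>'' t = V t * \<phi> t"
    and "continuous_on {a..b} V"
    and "\<And>t. t \<in> {a<..<b} \<Longrightarrow> \<phi> t \<noteq> 0"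
    and "\<phi> a = 0 \<Longrightarrow> f a = 0 \<and> \<phi>' a \<noteq> 0"
    and "\<phi> b = 0 \<Longrightarrow> f b = 0 \<and> \<phi>' b \<noteq> 0"
    and "\<And>t. t \<in> {a..b} \<Longrightarrow> (f has_real_derivative f' t) (at t within {a..b})"
    and "continuous_on {a..b} f'"
  shows "\<phi>' b / \<phi> b * (f b)^2 - \<phi>' a / \<phi> a * (f a)^2
    \<le> integral {a..b} (\<lambda>t. (f' t)^2 + V t * (f t)^2)"
  using has_integral_nonneg[OF picone_has_integral[OF assms]] by simp

lemma nonneg_has_integral_0_imp_zero:
  fixes R :: "real \<Rightarrow> real"
  assumes R: "(R has_integral 0) {a..b}" and nonneg: "\<And>t. 0 \<le> R t"
    and R_cont: "continuous_on {a<..<b} R" and t: "t \<in> {a<..<b}"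
  shows "R t = 0"
proof -
  define d where "d = min (t - a) (b - t) / 2"
  have "0 < d" "a < t - d" "t + d < b"
    using t by (auto simp: d_def min_def field_simps)
  then have d: "0 < d" "{t-d..t+d} \<subseteq> {a<..<b}" and sub: "{t-d..t+d} \<subseteq> {a..b}"
    by auto
  have cont: "continuous_on {t-d..t+d} R"
    using R_cont d(2) by (rule continuous_on_subset)
  have "integral {t-d..t+d} R \<le> integral {a..b} R"
    using sub integrable_continuous_real[OF cont] has_integral_integrable[OF R]
    by (rule integral_subset_le) (simp add: nonneg)
  moreover have "0 \<le> integral {t-d..t+d} R"
    using integrable_continuous_real[OF cont] by (rule integral_nonneg) (simp add: nonneg)
  ultimately have "integral {t-d..t+d} R = 0"
    using integral_unique[OF R] by linarith
  then show ?thesis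
    using integral_eq_0_iff[OF cont] d nonneg by auto
qed

lemma picone_remainder_zero_imp_proportional:
  fixes f f' \<phi> \<phi>' :: "real \<Rightarrow> real"
  assumes "a < b"
    and \<phi>': "\<And>t. (\<phi> has_real_derivative \<phi>' t) (at t)" and \<phi>'_cont: "\<And>t. isCont \<phi>' t"
    and \<phi>_nz: "\<And>t. t \<in> {a<..<b} \<Longrightarrow> \<phi> t \<noteq> 0"
    and ends: "\<phi> a = 0" "f a = 0" "\<phi> b = 0" "f b = 0"
    and f': "\<And>t. t \<in> {a..b} \<Longrightarrow> (f has_real_derivative f' t) (at t within {a..b})"
    and f'_cont: "continuous_on {a..b} f'"
    and remainder: "((\<lambda>t. (f' t - \<phi>' t / \<phi> t * f t)^2) has_integral 0) {a..b}"
  shows "\<exists>c. \<forall>t\<in>{a..b}. f t = c * \<phi> t"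
proof -
  have "continuous_on {a<..<b} (\<lambda>t. (f' t - \<phi>' t / \<phi> t * f t)^2)"
    using \<phi>_nz DERIV_isCont[OF \<phi>'] \<phi>'_cont
    by (intro continuous_intros continuous_at_imp_continuous_on ballI
        continuous_on_subset[OF f'_cont] continuous_on_subset[OF DERIV_continuous_on[OF f']]) auto
  then have slope: "f' t = \<phi>' t / \<phi> t * f t" if "t \<in> {a<..<b}" for t
    using nonneg_has_integral_0_imp_zero[OF remainder _ _ that] by simp
  have "((\<lambda>t. f t / \<phi> t) has_real_derivative 0) (at t within {a<..<b})" if t: "t \<in> {a<..<b}" for t
  proof -
    have ft: "(f has_real_derivative f' t) (at t)"
      using f'[of t] t at_within_interior[of t "{a..b}"] by auto
    have \<phi>t: "\<phi> t \<noteq> 0"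
      using \<phi>_nz t by blast
    have "((\<lambda>t. f t / \<phi> t) has_real_derivative 0) (at t)"
      apply (rule derivative_eq_intros ft \<phi>' \<phi>t refl | simp)+
      using slope[OF t] \<phi>t by (simp add: field_simps)
    then show ?thesis
      by (rule has_field_derivative_at_within)
  qed
  then obtain c where c: "\<And>t. t \<in> {a<..<b} \<Longrightarrow> f t / \<phi> t = c"
    using has_field_derivative_zero_constant[of "{a<..<b}" "\<lambda>t. f t / \<phi> t"] by auto
  have "f t = c * \<phi> t" if "t \<in> {a..b}" for t
  proof (cases "t \<in> {a<..<b}")
    case True
    then show ?thesis using c \<phi>_nz by (force simp: field_simps)
  next
    case False
    then show ?thesis using that ends by auto
  qed
  then show ?thesis by blast
qed

lemma derivative_eq_of_proportional:
  fixes f p :: "real \<Rightarrow> real"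
  assumes "a < b" "x \<in> {a..b}"
    and f: "(f has_real_derivative f') (at x within {a..b})"
    and f_eq: "\<And>t. t \<in> {a..b} \<Longrightarrow> f t = c * p t"
    and p: "(p has_real_derivative p') (at x)"
  shows "f' = c * p'"
proof -
  have "((\<lambda>t. c * p t) has_real_derivative f') (at x within {a..b})"
    by (rule has_field_derivative_transform_within[OF f zero_less_one \<open>x \<in> {a..b}\<close>])
      (simp add: f_eq)
  moreover have "((\<lambda>t. c * p t) has_real_derivative c * p') (at x within {a..b})"
    using DERIV_cmult[OF has_field_derivative_at_within[OF p]] .
  ultimately show ?thesis
    using vector_derivative_unique_within_closed_interval[of a b x "\<lambda>t. c * p t" f' "c * p'"] assms(1,2)
    by (simp add: has_real_derivative_iff_has_vector_derivative)
qed

section \<open>Comparison inequalities on \<open>[0, 2\<pi>]\<close>\<close>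

definition kepler_radius :: "real \<Rightarrow> real \<Rightarrow> real" where
  "kepler_radius e t = 1 / (1 + e * cos t)"

lemma kepler_denom_pos:
  fixes e t :: real
  assumes "0 \<le> e" "e < 1"
  shows "0 < 1 + e * cos t"
proof -
  have "- e \<le> e * cos t"
    using assms mult_left_mono[of "-1" "cos t" e] by simp
  then show ?thesis
    using assms by linarith
qed

lemma kepler_radius_pos: "0 \<le> e \<Longrightarrow> e < 1 \<Longrightarrow> 0 < kepler_radius e t"
  by (simp add: kepler_radius_def kepler_denom_pos)

lemma kepler_radius_ge: "0 \<le> e \<Longrightarrow> e < 1 \<Longrightarrow> 1 / (1 + e) \<le> kepler_radius e t"
  unfolding kepler_radius_def
  by (intro divide_left_mono) (auto simp: kepler_denom_pos mult_left_le)

lemma continuous_on_kepler_radius [continuous_intros]: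
  "0 \<le> e \<Longrightarrow> e < 1 \<Longrightarrow> continuous_on S (\<lambda>t. kepler_radius e t)"
  unfolding kepler_radius_def
  by (intro continuous_intros) (simp add: kepler_denom_pos less_imp_neq[symmetric])

lemma antiperiodic_has_zero:
  fixes f :: "real \<Rightarrow> real"
  assumes "continuous_on {0..2*pi} f" "f (2*pi) = - f 0"
  obtains t0 where "t0 \<in> {0..2*pi}" "f t0 = 0"
proof (cases "0 \<le> f 0")
  case True
  then show ?thesis
    using IVT2'[where f=f and a=0 and b="2*pi" and y=0] assms that by auto
next
  case False
  then show ?thesis
    using IVT'[where f=f and a=0 and b="2*pi" and y=0] assms that by auto
qed

text \<open>Picone's identity with \<open>\<phi> t = sin ((t - t\<^sub>0) / 2)\<close> on both sides of a zero \<open>t\<^sub>0\<close> of \<open>f\<close>;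
  the boundary terms at \<open>0\<close> and \<open>2\<pi>\<close> cancel by antiperiodicity.\<close>
lemma antiperiodic_wirtinger:
  fixes f f' :: "real \<Rightarrow> real"
  assumes f': "\<And>t. t \<in> {0..2*pi} \<Longrightarrow> (f has_real_derivative f' t) (at t within {0..2*pi})"
    and f'_cont: "continuous_on {0..2*pi} f'"
    and anti: "f (2*pi) = - f 0"
  shows "integral {0..2*pi} (\<lambda>t. (f t)^2) / 4 \<le> integral {0..2*pi} (\<lambda>t. (f' t)^2)"
proof -
  have f_cont: "continuous_on {0..2*pi} f"
    using f' by (rule DERIV_continuous_on)
  obtain t0 where t0: "t0 \<in> {0..2*pi}" "f t0 = 0"
    using antiperiodic_has_zero[OF f_cont anti] .
  define \<phi> where "\<phi> t = sin ((t - t0) / 2)" for t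
  define \<phi>' where "\<phi>' t = cos ((t - t0) / 2) / 2" for t
  define B where "B t = \<phi>' t / \<phi> t * (f t)^2" for t
  let ?L = "\<lambda>t. (f' t)^2 + (- 1/4) * (f t)^2"
  have \<phi>': "(\<phi> has_real_derivative \<phi>' t) (at t)" for t
    unfolding \<phi>_def[abs_def] \<phi>'_def by (rule derivative_eq_intros refl | simp)+
  have \<phi>'': "(\<phi>' has_real_derivative (- 1/4) * \<phi> t) (at t)" for t
    unfolding \<phi>'_def[abs_def] \<phi>_def by (rule derivative_eq_intros refl | simp)+
  have \<phi>_nz: "\<phi> t \<noteq> 0" if "t \<in> {0<..<2*pi}" "t \<noteq> t0" for t
    using sin_eq_0_pi[of "(t - t0) / 2"] that t0 by (auto simp: \<phi>_def)
  have ends: "\<phi> 0 = - sin (t0/2)" "\<phi> (2*pi) = sin (t0/2)"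
    "\<phi>' 0 = cos (t0/2) / 2" "\<phi>' (2*pi) = - cos (t0/2) / 2"
    by (simp_all add: \<phi>_def \<phi>'_def diff_divide_distrib)
  have "t0 = 0 \<or> t0 = 2*pi" if "sin (t0/2) = 0"
    using sin_gt_zero[of "t0/2"] that t0 by fastforce
  then have zero_ends: "f 0 = 0 \<and> cos (t0/2) \<noteq> 0" if "sin (t0/2) = 0"
    using that t0 anti by auto
  have half: "B b - B a \<le> integral {a..b} ?L" if "(a, b) \<in> {(0, t0), (t0, 2*pi)}" for a b
  proof -
    have sub: "{a..b} \<subseteq> {0..2*pi}"
      using that t0 by auto
    show ?thesis
      unfolding B_def
      by (rule picone_inequality[where V = "\<lambda>_. - 1/4", OF _ \<phi>' \<phi>''])
        (use that sub t0 \<phi>_nz ends zero_ends anti in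
          \<open>auto simp: \<phi>'_def intro: DERIV_subset[OF f'] continuous_on_subset[OF f'_cont]\<close>)
  qed
  have "B t0 = 0" "B (2*pi) = B 0"
    using t0 anti by (simp_all add: B_def ends)
  then have "0 \<le> integral {0..t0} ?L + integral {t0..2*pi} ?L"
    using half[of 0 t0] half[of t0 "2*pi"] by simp
  also have "\<dots> = integral {0..2*pi} ?L"
    using t0 by (intro Henstock_Kurzweil_Integration.integral_combine integrable_continuous_real
        continuous_intros f'_cont f_cont) auto
  also have "\<dots> = integral {0..2*pi} (\<lambda>t. (f' t)^2) + integral {0..2*pi} (\<lambda>t. (- 1/4) * (f t)^2)"
    by (rule integral_add; intro integrable_continuous_real continuous_intros f'_cont f_cont)
  finally show ?thesis
    by (simp only: integral_mult_right)
qed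

text \<open>Picone's identity with the nowhere vanishing \<open>\<phi> t = 1 + e cos t\<close>, which solves
  \<open>\<phi>'' = (kepler_radius e t - 1) \<phi>\<close>; its derivative vanishes at \<open>0\<close> and \<open>2\<pi>\<close>, and so do the
  boundary terms.\<close>
lemma kepler_radial_energy_nonneg:
  fixes f f' :: "real \<Rightarrow> real"
  assumes e: "0 \<le> e" "e < 1"
    and f': "\<And>t. t \<in> {0..2*pi} \<Longrightarrow> (f has_real_derivative f' t) (at t within {0..2*pi})"
    and f'_cont: "continuous_on {0..2*pi} f'"
  shows "0 \<le> integral {0..2*pi} (\<lambda>t. (f' t)^2 + (kepler_radius e t - 1) * (f t)^2)"
proof -
  define \<phi> where "\<phi> t = 1 + e * cos t" for t
  have \<phi>': "(\<phi> has_real_derivative - e * sin t) (at t)" for t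
    unfolding \<phi>_def[abs_def] by (rule derivative_eq_intros refl | simp)+
  have \<phi>'': "((\<lambda>t. - e * sin t) has_real_derivative (kepler_radius e t - 1) * \<phi> t) (at t)" for t
    using kepler_denom_pos[OF e, of t]
    unfolding \<phi>_def kepler_radius_def by (auto intro!: derivative_eq_intros simp: field_simps)
  have \<phi>_nz: "\<phi> t \<noteq> 0" for t
    using kepler_denom_pos[OF e, of t] by (simp add: \<phi>_def)
  have "- e * sin (2*pi) / \<phi> (2*pi) * (f (2*pi))^2 - - e * sin 0 / \<phi> 0 * (f 0)^2
      \<le> integral {0..2*pi} (\<lambda>t. (f' t)^2 + (kepler_radius e t - 1) * (f t)^2)"
  proof (rule picone_inequality[OF _ \<phi>' \<phi>''])
    show "continuous_on {0..2*pi} (\<lambda>t. kepler_radius e t - 1)"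
      using e by (intro continuous_intros)
  qed (use \<phi>_nz f' f'_cont in auto)
  then show ?thesis
    by simp
qed

text \<open>\<open>kepler_sin e\<close> solves \<open>\<phi>'' = (3 kepler_radius e t - 4) \<phi>\<close> and vanishes exactly at \<open>0\<close>, \<open>\<pi>\<close>
  and \<open>2\<pi>\<close>.\<close>
definition kepler_sin :: "real \<Rightarrow> real \<Rightarrow> real" where
  "kepler_sin e t = sin t * (1 + e * cos t)"

definition kepler_sin_deriv :: "real \<Rightarrow> real \<Rightarrow> real" where
  "kepler_sin_deriv e t = cos t * (1 + e * cos t) - e * (sin t)^2"

lemma kepler_sin_has_derivative: "(kepler_sin e has_real_derivative kepler_sin_deriv e t) (at t)"
  unfolding kepler_sin_def[abs_def] kepler_sin_deriv_def
  by (auto intro!: derivative_eq_intros simp: algebra_simps power2_eq_square)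

lemma kepler_sin_deriv_has_derivative:
  assumes "0 \<le> e" "e < 1"
  shows "(kepler_sin_deriv e has_real_derivative (3 * kepler_radius e t - 4) * kepler_sin e t) (at t)"
  using kepler_denom_pos[OF assms, of t]
  unfolding kepler_sin_deriv_def[abs_def] kepler_sin_def kepler_radius_def
  by (auto intro!: derivative_eq_intros simp: field_simps power2_eq_square)

lemma kepler_sin_nonzero:
  assumes "0 \<le> e" "e < 1" and "t \<in> {0<..<pi} \<union> {pi<..<2*pi}"
  shows "kepler_sin e t \<noteq> 0"
  using assms sin_gt_zero[of t] sin_lt_zero[of t] kepler_denom_pos[OF assms(1,2), of t]
  by (auto simp: kepler_sin_def)

lemma kepler_sin_values:
  "kepler_sin e 0 = 0" "kepler_sin e pi = 0" "kepler_sin e (2*pi) = 0"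
  "kepler_sin_deriv e 0 = 1 + e" "kepler_sin_deriv e pi = e - 1" "kepler_sin_deriv e (2*pi) = 1 + e"
  by (simp_all add: kepler_sin_def kepler_sin_deriv_def)

lemma kepler_tangential_picone:
  fixes f f' :: "real \<Rightarrow> real"
  assumes e: "0 \<le> e" "e < 1"
    and f': "\<And>t. t \<in> {0..2*pi} \<Longrightarrow> (f has_real_derivative f' t) (at t within {0..2*pi})"
    and f'_cont: "continuous_on {0..2*pi} f'"
    and zeros: "f 0 = 0" "f pi = 0" "f (2*pi) = 0"
    and half: "(a, b) \<in> {(0, pi), (pi, 2*pi)}"
  shows "((\<lambda>t. (f' t - kepler_sin_deriv e t / kepler_sin e t * f t)^2)
           has_integral integral {a..b} (\<lambda>t. (f' t)^2 + (3 * kepler_radius e t - 4) * (f t)^2)) {a..b}"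
proof -
  have sub: "{a..b} \<subseteq> {0..2*pi}"
    using half by auto
  have ends: "kepler_sin e a = 0" "f a = 0" "kepler_sin_deriv e a \<noteq> 0"
    "kepler_sin e b = 0" "f b = 0" "kepler_sin_deriv e b \<noteq> 0"
    using half zeros e by (auto simp: kepler_sin_values)
  have "((\<lambda>t. (f' t - kepler_sin_deriv e t / kepler_sin e t * f t)^2) has_integral
      integral {a..b} (\<lambda>t. (f' t)^2 + (3 * kepler_radius e t - 4) * (f t)^2)
        - (kepler_sin_deriv e b / kepler_sin e b * (f b)^2
           - kepler_sin_deriv e a / kepler_sin e a * (f a)^2)) {a..b}"
  proof (rule picone_has_integral)
    show "a \<le> b"
      using half by auto
    show "(kepler_sin e has_real_derivative kepler_sin_deriv e t) (at t)" for t
      by (rule kepler_sin_has_derivative)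
    show "(kepler_sin_deriv e has_real_derivative (3 * kepler_radius e t - 4) * kepler_sin e t) (at t)"
      for t
      using e by (rule kepler_sin_deriv_has_derivative)
    show "continuous_on {a..b} (\<lambda>t. 3 * kepler_radius e t - 4)"
      using e by (intro continuous_intros)
    show "kepler_sin e t \<noteq> 0" if "t \<in> {a<..<b}" for t
      using e half that by (intro kepler_sin_nonzero) auto
    show "(f has_real_derivative f' t) (at t within {a..b})" if "t \<in> {a..b}" for t
      using f' sub that by (blast intro: DERIV_subset)
    show "continuous_on {a..b} f'"
      using sub f'_cont by (rule continuous_on_subset[rotated])
  qed (use ends in simp_all)
  then show ?thesis
    using ends by simp
qed

lemma kepler_tangential_energy_halves:
  fixes f f' :: "real \<Rightarrow> real"
  assumes "0 \<le> e" "e < 1" "continuous_on {0..2*pi} f" "continuous_on {0..2*pi} f'"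
  shows "integral {0..2*pi} (\<lambda>t. (f' t)^2 + (3 * kepler_radius e t - 4) * (f t)^2)
    = integral {0..pi} (\<lambda>t. (f' t)^2 + (3 * kepler_radius e t - 4) * (f t)^2)
      + integral {pi..2*pi} (\<lambda>t. (f' t)^2 + (3 * kepler_radius e t - 4) * (f t)^2)"
proof -
  have "(\<lambda>t. (f' t)^2 + (3 * kepler_radius e t - 4) * (f t)^2) integrable_on {0..2*pi}"
    using assms by (intro integrable_continuous_real continuous_intros)
  then show ?thesis
    by (simp add: Henstock_Kurzweil_Integration.integral_combine)
qed

lemma kepler_tangential_energy_nonneg:
  fixes f f' :: "real \<Rightarrow> real"
  assumes e: "0 \<le> e" "e < 1"
    and f': "\<And>t. t \<in> {0..2*pi} \<Longrightarrow> (f has_real_derivative f' t) (at t within {0..2*pi})"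
    and f'_cont: "continuous_on {0..2*pi} f'"
    and zeros: "f 0 = 0" "f pi = 0" "f (2*pi) = 0"
  shows "0 \<le> integral {0..2*pi} (\<lambda>t. (f' t)^2 + (3 * kepler_radius e t - 4) * (f t)^2)"
proof -
  have "0 \<le> integral {a..b} (\<lambda>t. (f' t)^2 + (3 * kepler_radius e t - 4) * (f t)^2)"
    if "(a, b) \<in> {(0, pi), (pi, 2*pi)}" for a b
  proof (rule has_integral_nonneg)
    show "((\<lambda>t. (f' t - kepler_sin_deriv e t / kepler_sin e t * f t)^2) has_integral
        integral {a..b} (\<lambda>t. (f' t)^2 + (3 * kepler_radius e t - 4) * (f t)^2)) {a..b}"
      by (rule kepler_tangential_picone[OF e _ f'_cont zeros that]) (rule f')
  qed simp
  moreover have "continuous_on {0..2*pi} f"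
    using f' by (rule DERIV_continuous_on)
  ultimately show ?thesis
    using kepler_tangential_energy_halves[OF e _ f'_cont] by simp
qed

lemma kepler_tangential_energy_zero_imp_proportional:
  fixes f f' :: "real \<Rightarrow> real"
  assumes e: "0 \<le> e" "e < 1"
    and f': "\<And>t. t \<in> {0..2*pi} \<Longrightarrow> (f has_real_derivative f' t) (at t within {0..2*pi})"
    and f'_cont: "continuous_on {0..2*pi} f'"
    and zeros: "f 0 = 0" "f pi = 0" "f (2*pi) = 0"
    and zero: "integral {0..2*pi} (\<lambda>t. (f' t)^2 + (3 * kepler_radius e t - 4) * (f t)^2) = 0"
    and half: "(a, b) \<in> {(0, pi), (pi, 2*pi)}"
  shows "\<exists>c. \<forall>t\<in>{a..b}. f t = c * kepler_sin e t"
proof (rule picone_remainder_zero_imp_proportional)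
  define L where "L = (\<lambda>t. (f' t)^2 + (3 * kepler_radius e t - 4) * (f t)^2)"
  have picone: "((\<lambda>t. (f' t - kepler_sin_deriv e t / kepler_sin e t * f t)^2)
      has_integral integral {c..d} L) {c..d}" if "(c, d) \<in> {(0, pi), (pi, 2*pi)}" for c d
    unfolding L_def by (rule kepler_tangential_picone[OF e _ f'_cont zeros that]) (rule f')
  have nonneg: "0 \<le> integral {c..d} L" if "(c, d) \<in> {(0, pi), (pi, 2*pi)}" for c d
    using picone[OF that] by (rule has_integral_nonneg) simp
  have "integral {0..pi} L + integral {pi..2*pi} L = 0"
    using kepler_tangential_energy_halves[OF e DERIV_continuous_on[OF f'] f'_cont] zero
    by (simp add: L_def)
  moreover have "0 \<le> integral {0..pi} L" "0 \<le> integral {pi..2*pi} L"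
    by (simp_all add: nonneg)
  ultimately have "integral {0..pi} L = 0" "integral {pi..2*pi} L = 0"
    by linarith+
  then show "((\<lambda>t. (f' t - kepler_sin_deriv e t / kepler_sin e t * f t)^2) has_integral 0) {a..b}"
    using picone[OF half] half by auto
  show "a < b"
    using half by auto
  show "(kepler_sin e has_real_derivative kepler_sin_deriv e t) (at t)" for t
    by (rule kepler_sin_has_derivative)
  show "isCont (kepler_sin_deriv e) t" for t
    unfolding kepler_sin_deriv_def[abs_def] by (intro continuous_intros)
  show "kepler_sin e t \<noteq> 0" if "t \<in> {a<..<b}" for t
    using e half that by (intro kepler_sin_nonzero) auto
  show "kepler_sin e a = 0" "f a = 0" "kepler_sin e b = 0" "f b = 0"
    using half zeros by (auto simp: kepler_sin_values)
  show "(f has_real_derivative f' t) (at t within {a..b})" if "t \<in> {a..b}" for t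
    using half that by (intro DERIV_subset[OF f']) auto
  show "continuous_on {a..b} f'"
    using half by (auto intro: continuous_on_subset[OF f'_cont])
qed

text \<open>On each half \<open>f\<close> is a multiple of \<open>kepler_sin e\<close>; matching slopes at \<open>\<pi>\<close> and, through
  antiperiodicity of \<open>f'\<close>, at \<open>0 \<equiv> 2\<pi>\<close> forces both multiples to vanish.\<close>
lemma kepler_tangential_energy_zero:
  fixes f f' :: "real \<Rightarrow> real"
  assumes e: "0 \<le> e" "e < 1"
    and f': "\<And>t. t \<in> {0..2*pi} \<Longrightarrow> (f has_real_derivative f' t) (at t within {0..2*pi})"
    and f'_cont: "continuous_on {0..2*pi} f'"
    and zeros: "f 0 = 0" "f pi = 0" "f (2*pi) = 0"
    and anti: "f' (2*pi) = - f' 0"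
    and zero: "integral {0..2*pi} (\<lambda>t. (f' t)^2 + (3 * kepler_radius e t - 4) * (f t)^2) = 0"
  shows "\<forall>t\<in>{0..2*pi}. f t = 0"
proof -
  note proportional = kepler_tangential_energy_zero_imp_proportional[OF e _ f'_cont zeros zero]
  obtain c1 where c1: "\<forall>t\<in>{0..pi}. f t = c1 * kepler_sin e t"
    using proportional[of 0 pi] f' by auto
  obtain c2 where c2: "\<forall>t\<in>{pi..2*pi}. f t = c2 * kepler_sin e t"
    using proportional[of pi "2*pi"] f' by auto
  have slopes: "f' x = c * kepler_sin_deriv e x"
    if half: "(a, b) \<in> {(0, pi), (pi, 2*pi)}" and x: "x \<in> {a, b}"
      and c: "\<forall>t\<in>{a..b}. f t = c * kepler_sin e t"
    for a b c x
  proof (rule derivative_eq_of_proportional)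
    show "a < b" "x \<in> {a..b}"
      using half x by auto
    show "(f has_real_derivative f' x) (at x within {a..b})"
      using half x by (intro DERIV_subset[OF f']) auto
    show "f t = c * kepler_sin e t" if "t \<in> {a..b}" for t
      using c that by blast
    show "(kepler_sin e has_real_derivative kepler_sin_deriv e x) (at x)"
      by (rule kepler_sin_has_derivative)
  qed
  have "f' 0 = c1 * (1 + e)" "f' pi = c1 * (e - 1)"
    using slopes[of 0 pi _ c1] c1 by (auto simp: kepler_sin_values)
  moreover have "f' pi = c2 * (e - 1)" "f' (2*pi) = c2 * (1 + e)"
    using slopes[of pi "2*pi" _ c2] c2 by (auto simp: kepler_sin_values)
  ultimately have "c1 * (e - 1) = c2 * (e - 1)" "(c1 + c2) * (1 + e) = 0"
    using anti by (auto simp: algebra_simps)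
  then have "c1 = 0" "c2 = 0"
    using e by auto
  then show ?thesis
    using c1 c2 by (metis atLeastAtMost_iff linorder_le_cases mult_zero_left)
qed

section \<open>The real quadratic form\<close>

lemma integral_square_nonneg:
  fixes f :: "real \<Rightarrow> real"
  assumes "continuous_on {a..b} f"
  shows "0 \<le> integral {a..b} (\<lambda>t. (f t)^2)"
  using assms by (intro integral_nonneg integrable_continuous_real continuous_intros) simp_all

lemma integral_square_eq_0_imp:
  fixes f :: "real \<Rightarrow> real"
  assumes "continuous_on {a..b} f" "a < b" "integral {a..b} (\<lambda>t. (f t)^2) = 0"
  shows "\<forall>t\<in>{a..b}. f t = 0"
proof -
  have "continuous_on {a..b} (\<lambda>t. (f t)^2)"
    using assms(1) by (intro continuous_intros)
  then show ?thesis
    using integral_eq_0_iff[of a b "\<lambda>t. (f t)^2"] assms(2,3) by simp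
qed

locale antiperiodic_curve =
  fixes x1 x2 x1' x2' x1'' x2'' :: "real \<Rightarrow> real"
  assumes x1': "\<And>t. t \<in> {0..2*pi} \<Longrightarrow> (x1 has_real_derivative x1' t) (at t within {0..2*pi})"
    and x2': "\<And>t. t \<in> {0..2*pi} \<Longrightarrow> (x2 has_real_derivative x2' t) (at t within {0..2*pi})"
    and x1'': "\<And>t. t \<in> {0..2*pi} \<Longrightarrow> (x1' has_real_derivative x1'' t) (at t within {0..2*pi})"
    and x2'': "\<And>t. t \<in> {0..2*pi} \<Longrightarrow> (x2' has_real_derivative x2'' t) (at t within {0..2*pi})"
    and x1''_cont: "continuous_on {0..2*pi} x1''"
    and x2''_cont: "continuous_on {0..2*pi} x2''"
    and antiperiodic: "x1 (2*pi) = - x1 0" "x2 (2*pi) = - x2 0" "x1' (2*pi) = - x1' 0" "x2' (2*pi) = - x2' 0"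
begin

lemma continuous_on_x [continuous_intros]:
  "continuous_on {0..2*pi} x1" "continuous_on {0..2*pi} x2"
  "continuous_on {0..2*pi} x1'" "continuous_on {0..2*pi} x2'"
  "continuous_on {0..2*pi} x1''" "continuous_on {0..2*pi} x2''"
proof -
  show "continuous_on {0..2*pi} x1"
    using x1' by (rule DERIV_continuous_on)
  show "continuous_on {0..2*pi} x2"
    using x2' by (rule DERIV_continuous_on)
  show "continuous_on {0..2*pi} x1'"
    using x1'' by (rule DERIV_continuous_on)
  show "continuous_on {0..2*pi} x2'"
    using x2'' by (rule DERIV_continuous_on)
qed (fact x1''_cont x2''_cont)+

text \<open>\<open>(z1, z2) = R(t)\<^sup>T (x1, x2)\<close> are the coordinates in the frame rotating with the principal axes
  of the potential; \<open>z1'\<close> is the derivative of \<open>z1\<close>, and \<open>h = z2' + 2 z1\<close>.\<close>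
definition z1 where "z1 t = cos t * x1 t + sin t * x2 t"
definition z2 where "z2 t = - sin t * x1 t + cos t * x2 t"
definition z1' where "z1' t = z2 t + (cos t * x1' t + sin t * x2' t)"
definition h where "h t = z1 t + (- sin t * x1' t + cos t * x2' t)"

lemma continuous_on_z [continuous_intros]:
  "continuous_on {0..2*pi} z1" "continuous_on {0..2*pi} z2"
  "continuous_on {0..2*pi} z1'" "continuous_on {0..2*pi} h"
  unfolding z1_def[abs_def] z2_def[abs_def] z1'_def[abs_def] h_def[abs_def]
  by (intro continuous_intros)+

lemma z1_has_derivative:
  "t \<in> {0..2*pi} \<Longrightarrow> (z1 has_real_derivative z1' t) (at t within {0..2*pi})"
  unfolding z1_def[abs_def] z1'_def z2_def
  by (rule derivative_eq_intros x1' x2' refl | assumption)+ (simp add: algebra_simps)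

lemma z2_has_derivative:
  "t \<in> {0..2*pi} \<Longrightarrow> (z2 has_real_derivative h t - 2 * z1 t) (at t within {0..2*pi})"
  unfolding z2_def[abs_def] h_def z1_def
  by (rule derivative_eq_intros x1' x2' refl | assumption)+ (simp add: algebra_simps)

lemma antiperiodic_z:
  "z1 (2*pi) = - z1 0" "z2 (2*pi) = - z2 0" "z1' (2*pi) = - z1' 0" "h (2*pi) = - h 0"
  by (simp_all add: z1_def z2_def z1'_def h_def antiperiodic)

lemma norm_z: "(z1 t)^2 + (z2 t)^2 = (x1 t)^2 + (x2 t)^2"
proof -
  have "(sin t)^2 + (cos t)^2 = 1" by simp
  then show ?thesis
    unfolding z1_def z2_def by algebra
qed

lemma x_eq_zero_if_z_eq_zero:
  assumes "z1 t = 0" "z2 t = 0"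
  shows "x1 t = 0" "x2 t = 0"
proof -
  have "(sin t)^2 + (cos t)^2 = 1" by simp
  then have "x1 t = cos t * z1 t - sin t * z2 t" "x2 t = sin t * z1 t + cos t * z2 t"
    unfolding z1_def z2_def by algebra+
  then show "x1 t = 0" "x2 t = 0"
    using assms by simp_all
qed

lemma by_parts_has_integral:
  "((\<lambda>t. x1'' t * x1 t + x2'' t * x2 t + (x1' t)^2 + (x2' t)^2) has_integral 0) {0..2*pi}"
proof -
  have "((\<lambda>t. x1' t * x1 t + x2' t * x2 t) has_real_derivative
      x1'' t * x1 t + x2'' t * x2 t + (x1' t)^2 + (x2' t)^2) (at t within {0..2*pi})"
    if "t \<in> {0..2*pi}" for t
    by (rule derivative_eq_intros x1' x2' x1'' x2'' refl that)+ (simp add: power2_eq_square)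
  then show ?thesis
    using fundamental_theorem_of_calculus[of 0 "2*pi" "\<lambda>t. x1' t * x1 t + x2' t * x2 t"]
    by (simp add: has_real_derivative_iff_has_vector_derivative antiperiodic)
qed

text \<open>The boundary term is \<open>- 2 z1 z2\<close>, which is \<open>2\<pi>\<close>-periodic.\<close>
lemma rotating_frame_has_integral:
  "((\<lambda>t. (x1' t)^2 + (x2' t)^2 - (x1 t)^2 - (x2 t)^2 - ((z1' t)^2 + (h t)^2 - 4 * (z1 t)^2))
     has_integral 0) {0..2*pi}"
proof -
  have "((\<lambda>t. - 2 * (z1 t * z2 t)) has_real_derivative
      (x1' t)^2 + (x2' t)^2 - (x1 t)^2 - (x2 t)^2 - ((z1' t)^2 + (h t)^2 - 4 * (z1 t)^2))
      (at t within {0..2*pi})"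
    if "t \<in> {0..2*pi}" for t
  proof -
    have "((\<lambda>t. - 2 * (z1 t * z2 t)) has_real_derivative
        - 2 * (z1' t * z2 t + z1 t * (h t - 2 * z1 t))) (at t within {0..2*pi})"
      by (rule derivative_eq_intros z1_has_derivative z2_has_derivative that refl)+
        (simp add: algebra_simps)
    moreover have "(sin t)^2 + (cos t)^2 = 1" by simp
    then have "- 2 * (z1' t * z2 t + z1 t * (h t - 2 * z1 t))
      = (x1' t)^2 + (x2' t)^2 - (x1 t)^2 - (x2 t)^2 - ((z1' t)^2 + (h t)^2 - 4 * (z1 t)^2)"
      unfolding z1'_def h_def z1_def z2_def by algebra
    ultimately show ?thesis
      by simp
  qed
  then show ?thesis
    using fundamental_theorem_of_calculus[of 0 "2*pi" "\<lambda>t. - 2 * (z1 t * z2 t)"]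
    by (simp add: has_real_derivative_iff_has_vector_derivative antiperiodic_z)
qed


lemma x_eq_zero_if_z1_h_eq_zero:
  assumes z1: "\<forall>t\<in>{0..2*pi}. z1 t = 0" and h: "\<forall>t\<in>{0..2*pi}. h t = 0"
  shows "\<forall>t\<in>{0..2*pi}. x1 t = 0 \<and> x2 t = 0"
proof -
  have "(z2 has_real_derivative 0) (at t within {0..2*pi})" if "t \<in> {0..2*pi}" for t
    using z2_has_derivative[OF that] z1 h that by simp
  then obtain c where c: "\<And>t. t \<in> {0..2*pi} \<Longrightarrow> z2 t = c"
    using has_field_derivative_zero_constant[of "{0..2*pi}" z2] by auto
  then have "c = 0"
    using antiperiodic_z(2) c[of 0] c[of "2*pi"] by simp
  then show ?thesis
    using c z1 x_eq_zero_if_z_eq_zero by simp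
qed

text \<open>The quadratic form \<open>\<integral> \<langle>- x'' - x + K x, x\<rangle>\<close> of the potential
  \<open>K = kepler_radius e t R(t) diag(A, B) R(t)\<^sup>T\<close>, for which \<open>\<langle>K x, x\<rangle> = kepler_radius e t (A z1\<^sup>2 + B z2\<^sup>2)\<close>.\<close>
definition qform_density :: "real \<Rightarrow> real \<Rightarrow> real \<Rightarrow> real \<Rightarrow> real" where
  "qform_density e A B t = - x1'' t * x1 t - x2'' t * x2 t - (x1 t)^2 - (x2 t)^2
      + kepler_radius e t * (A * (z1 t)^2 + B * (z2 t)^2)"

definition qform :: "real \<Rightarrow> real \<Rightarrow> real \<Rightarrow> real" where
  "qform e A B = integral {0..2*pi} (qform_density e A B)"

lemma qform_density_integrable:
  "0 \<le> e \<Longrightarrow> e < 1 \<Longrightarrow> qform_density e A B integrable_on {0..2*pi}"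
  unfolding qform_density_def[abs_def] by (intro integrable_continuous_real continuous_intros)

lemma qform_rotating_frame:
  assumes "0 \<le> e" "e < 1"
  shows "qform e A B = integral {0..2*pi} (\<lambda>t. (z1' t)^2 + (h t)^2 - 4 * (z1 t)^2
      + kepler_radius e t * (A * (z1 t)^2 + B * (z2 t)^2))"
    (is "_ = integral _ ?rot")
proof -
  have "(?rot has_integral integral {0..2*pi} ?rot) {0..2*pi}"
    using assms by (intro integrable_integral integrable_continuous_real continuous_intros)
  from has_integral_add[OF has_integral_diff[OF this by_parts_has_integral] rotating_frame_has_integral]
  have "((\<lambda>t. - x1'' t * x1 t - x2'' t * x2 t - (x1 t)^2 - (x2 t)^2
      + kepler_radius e t * (A * (z1 t)^2 + B * (z2 t)^2)) has_integral integral {0..2*pi} ?rot - 0 + 0)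
      {0..2*pi}"
    by (rule has_integral_eq[rotated]) (simp add: algebra_simps)
  then show ?thesis
    unfolding qform_def qform_density_def[abs_def] by (simp add: integral_unique)
qed

text \<open>This is the part of the form that \<open>\<phi> t = 1 + e cos t\<close> controls.\<close>
lemma radial_part_nonneg:
  assumes e: "0 \<le> e" "e < 1"
  shows "0 \<le> integral {0..2*pi}
    (\<lambda>t. (z1' t)^2 + (h t)^2 - 4 * (z1 t)^2 + kepler_radius e t * ((z1 t)^2 + (z2 t)^2))"
proof -
  define I where "I x x' = integral {0..2*pi} (\<lambda>t. (x' t)^2 + (kepler_radius e t - 1) * (x t)^2)"
    for x x' :: "real \<Rightarrow> real"
  have "((\<lambda>t. (x1' t)^2 + (kepler_radius e t - 1) * (x1 t)^2
      + ((x2' t)^2 + (kepler_radius e t - 1) * (x2 t)^2)) has_integral I x1 x1' + I x2 x2') {0..2*pi}"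
    unfolding I_def using e
    by (intro has_integral_add integrable_integral integrable_continuous_real continuous_intros)
  from has_integral_diff[OF this rotating_frame_has_integral]
  have "((\<lambda>t. (z1' t)^2 + (h t)^2 - 4 * (z1 t)^2 + kepler_radius e t * ((z1 t)^2 + (z2 t)^2))
      has_integral I x1 x1' + I x2 x2' - 0) {0..2*pi}"
    by (rule has_integral_eq[rotated]) (simp add: norm_z algebra_simps)
  moreover have "0 \<le> I x1 x1'"
    unfolding I_def by (rule kepler_radial_energy_nonneg[OF e _ continuous_on_x(3)]) (rule x1')
  moreover have "0 \<le> I x2 x2'"
    unfolding I_def by (rule kepler_radial_energy_nonneg[OF e _ continuous_on_x(4)]) (rule x2')
  ultimately show ?thesis
    by (simp add: integral_unique)
qed

lemma qform_decomposition:
  assumes e: "0 \<le> e" "e < 1" and "B \<noteq> 1"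
  shows "qform e A B
    = (1 - B) * integral {0..2*pi}
        (\<lambda>t. (z1' t)^2 + ((A - B) / (1 - B) * kepler_radius e t - 4) * (z1 t)^2)
      + (1 - B) * integral {0..2*pi} (\<lambda>t. (h t)^2)
      + B * integral {0..2*pi}
        (\<lambda>t. (z1' t)^2 + (h t)^2 - 4 * (z1 t)^2 + kepler_radius e t * ((z1 t)^2 + (z2 t)^2))"
proof -
  let ?T = "\<lambda>t. (z1' t)^2 + ((A - B) / (1 - B) * kepler_radius e t - 4) * (z1 t)^2"
  let ?R = "\<lambda>t. (z1' t)^2 + (h t)^2 - 4 * (z1 t)^2 + kepler_radius e t * ((z1 t)^2 + (z2 t)^2)"
  have "((\<lambda>t. (1 - B) * ?T t + (1 - B) * (h t)^2 + B * ?R t) has_integral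
      (1 - B) * integral {0..2*pi} ?T + (1 - B) * integral {0..2*pi} (\<lambda>t. (h t)^2)
        + B * integral {0..2*pi} ?R) {0..2*pi}"
    using e by (intro has_integral_add has_integral_mult_right integrable_integral
        integrable_continuous_real continuous_intros)
  moreover have "(1 - B) * ?T t + (1 - B) * (h t)^2 + B * ?R t
      = (z1' t)^2 + (h t)^2 - 4 * (z1 t)^2 + kepler_radius e t * (A * (z1 t)^2 + B * (z2 t)^2)" for t
    using \<open>B \<noteq> 1\<close> by (simp add: field_simps)
  ultimately show ?thesis
    unfolding qform_rotating_frame[OF e] by (simp add: integral_unique)
qed

text \<open>The tangential part: everything else in the decomposition is nonnegative.\<close>
lemma qform_nonneg_if_tangential_part:
  assumes e: "0 \<le> e" "e < 1" and B: "0 \<le> B" "B < 1"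
    and T_nonneg: "0 \<le> integral {0..2*pi}
      (\<lambda>t. (z1' t)^2 + ((A - B) / (1 - B) * kepler_radius e t - 4) * (z1 t)^2)"
    and T_zero: "integral {0..2*pi}
      (\<lambda>t. (z1' t)^2 + ((A - B) / (1 - B) * kepler_radius e t - 4) * (z1 t)^2) = 0
      \<Longrightarrow> \<forall>t\<in>{0..2*pi}. z1 t = 0"
  shows "0 \<le> qform e A B" and "qform e A B = 0 \<Longrightarrow> \<forall>t\<in>{0..2*pi}. x1 t = 0 \<and> x2 t = 0"
proof -
  let ?T = "integral {0..2*pi} (\<lambda>t. (z1' t)^2 + ((A - B) / (1 - B) * kepler_radius e t - 4) * (z1 t)^2)"
  let ?H = "integral {0..2*pi} (\<lambda>t. (h t)^2)"
  let ?R = "integral {0..2*pi}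
    (\<lambda>t. (z1' t)^2 + (h t)^2 - 4 * (z1 t)^2 + kepler_radius e t * ((z1 t)^2 + (z2 t)^2))"
  have q: "qform e A B = (1 - B) * ?T + (1 - B) * ?H + B * ?R"
    by (rule qform_decomposition[OF e]) (use B in simp)
  have H: "0 \<le> ?H"
    by (intro integral_square_nonneg continuous_intros)
  have R: "0 \<le> ?R"
    using e by (rule radial_part_nonneg)
  have parts: "0 \<le> (1 - B) * ?T" "0 \<le> (1 - B) * ?H" "0 \<le> B * ?R"
    using B T_nonneg H R by simp_all
  then show "0 \<le> qform e A B"
    unfolding q by linarith
  assume "qform e A B = 0"
  then have "(1 - B) * ?T = 0" "(1 - B) * ?H = 0"
    using parts unfolding q by linarith+
  then have "?T = 0" "?H = 0"
    using B by simp_all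
  then have "\<forall>t\<in>{0..2*pi}. z1 t = 0" "\<forall>t\<in>{0..2*pi}. h t = 0"
    using T_zero integral_square_eq_0_imp[OF continuous_on_z(4)] by simp_all
  then show "\<forall>t\<in>{0..2*pi}. x1 t = 0 \<and> x2 t = 0"
    by (rule x_eq_zero_if_z1_h_eq_zero)
qed

lemma tangential_part_mono:
  assumes "continuous_on {0..2*pi} V" "continuous_on {0..2*pi} W" "\<And>t. V t \<le> W t"
  shows "integral {0..2*pi} (\<lambda>t. (z1' t)^2 + V t * (z1 t)^2)
    \<le> integral {0..2*pi} (\<lambda>t. (z1' t)^2 + W t * (z1 t)^2)"
proof (rule integral_le)
  show "(\<lambda>t. (z1' t)^2 + V t * (z1 t)^2) integrable_on {0..2*pi}"
    "(\<lambda>t. (z1' t)^2 + W t * (z1 t)^2) integrable_on {0..2*pi}"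
    by (intro integrable_continuous_real continuous_intros assms)+
  show "(z1' t)^2 + V t * (z1 t)^2 \<le> (z1' t)^2 + W t * (z1 t)^2" for t
    using assms(3) by (simp add: mult_right_mono)
qed

theorem qform_nonneg_if_x1_vanishes:
  assumes e: "0 \<le> e" "e < 1" and B: "0 \<le> B" "B < 1" and A: "3 - 2 * B \<le> A"
    and x1_zeros: "x1 0 = 0" "x1 pi = 0"
  shows "0 \<le> qform e A B" and "qform e A B = 0 \<Longrightarrow> \<forall>t\<in>{0..2*pi}. x1 t = 0 \<and> x2 t = 0"
proof -
  let ?C = "(A - B) / (1 - B)"
  let ?T3 = "integral {0..2*pi} (\<lambda>t. (z1' t)^2 + (3 * kepler_radius e t - 4) * (z1 t)^2)"
  let ?T = "integral {0..2*pi} (\<lambda>t. (z1' t)^2 + (?C * kepler_radius e t - 4) * (z1 t)^2)"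
  have "3 \<le> ?C"
    using A B by (simp add: field_simps)
  then have "3 * kepler_radius e t \<le> ?C * kepler_radius e t" for t
    using kepler_radius_pos[OF e, of t] by (intro mult_right_mono) simp_all
  then have "3 * kepler_radius e t - 4 \<le> ?C * kepler_radius e t - 4" for t
    by (simp add: algebra_simps)
  then have T3_le: "?T3 \<le> ?T"
    using e by (intro tangential_part_mono continuous_intros)
  have z1_zeros: "z1 0 = 0" "z1 pi = 0" "z1 (2*pi) = 0"
    using x1_zeros antiperiodic_z(1) by (simp_all add: z1_def)
  have T3_nonneg: "0 \<le> ?T3"
    by (rule kepler_tangential_energy_nonneg[OF e _ continuous_on_z(3) z1_zeros])
      (rule z1_has_derivative)
  have T_nonneg: "0 \<le> ?T"
    using T3_nonneg T3_le by linarith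
  have T_zero: "\<forall>t\<in>{0..2*pi}. z1 t = 0" if "?T = 0"
  proof -
    have "?T3 = 0"
      using T3_nonneg T3_le that by linarith
    show ?thesis
      by (rule kepler_tangential_energy_zero[OF e _ continuous_on_z(3) z1_zeros antiperiodic_z(3)
            \<open>?T3 = 0\<close>])
        (rule z1_has_derivative)
  qed
  note tangential = qform_nonneg_if_tangential_part[OF e B T_nonneg T_zero]
  show "0 \<le> qform e A B"
    by (rule tangential(1))
  show "qform e A B = 0 \<Longrightarrow> \<forall>t\<in>{0..2*pi}. x1 t = 0 \<and> x2 t = 0"
    by (rule tangential(2))
qed

text \<open>Wirtinger's inequality controls the tangential part once \<open>C kepler_radius e t > 15/4\<close>.\<close>
lemma tangential_part_coercive:
  assumes e: "0 \<le> e" "e < 1" and C: "\<And>t. \<kappa> + 15/4 \<le> C * kepler_radius e t"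
  shows "\<kappa> * integral {0..2*pi} (\<lambda>t. (z1 t)^2)
    \<le> integral {0..2*pi} (\<lambda>t. (z1' t)^2 + (C * kepler_radius e t - 4) * (z1 t)^2)"
proof -
  let ?Z = "integral {0..2*pi} (\<lambda>t. (z1 t)^2)"
  have "\<kappa> - 1/4 \<le> C * kepler_radius e t - 4" for t
    using C[of t] by simp
  then have "integral {0..2*pi} (\<lambda>t. (z1' t)^2 + (\<kappa> - 1/4) * (z1 t)^2)
      \<le> integral {0..2*pi} (\<lambda>t. (z1' t)^2 + (C * kepler_radius e t - 4) * (z1 t)^2)"
    using e by (intro tangential_part_mono continuous_intros)
  moreover have "integral {0..2*pi} (\<lambda>t. (z1' t)^2 + (\<kappa> - 1/4) * (z1 t)^2)
      = integral {0..2*pi} (\<lambda>t. (z1' t)^2) + integral {0..2*pi} (\<lambda>t. (\<kappa> - 1/4) * (z1 t)^2)"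
    by (rule integral_add; intro integrable_continuous_real continuous_intros)
  moreover have "integral {0..2*pi} (\<lambda>t. (\<kappa> - 1/4) * (z1 t)^2) = \<kappa> * ?Z - ?Z / 4"
    by (simp only: integral_mult_right) (simp add: algebra_simps)
  moreover have "?Z / 4 \<le> integral {0..2*pi} (\<lambda>t. (z1' t)^2)"
    by (rule antiperiodic_wirtinger[OF _ continuous_on_z(3) antiperiodic_z(1)])
      (rule z1_has_derivative)
  ultimately show ?thesis
    by linarith
qed

theorem qform_nonneg_if_A_large:
  assumes e: "0 \<le> e" "e < 1" and B: "0 \<le> B" "B < 1" and A: "B + 15/4 * (1 + e) * (1 - B) < A"
  shows "0 \<le> qform e A B" and "qform e A B = 0 \<Longrightarrow> \<forall>t\<in>{0..2*pi}. x1 t = 0 \<and> x2 t = 0"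
proof -
  let ?C = "(A - B) / (1 - B)"
  define \<kappa> where "\<kappa> = ?C / (1 + e) - 15/4"
  let ?Z = "integral {0..2*pi} (\<lambda>t. (z1 t)^2)"
  let ?T = "integral {0..2*pi} (\<lambda>t. (z1' t)^2 + (?C * kepler_radius e t - 4) * (z1 t)^2)"
  have pos: "0 < (1 - B) * (1 + e)"
    using B e by simp
  have gap: "15/4 * ((1 - B) * (1 + e)) < A - B"
    using A by (simp add: algebra_simps)
  then have "15/4 < (A - B) / ((1 - B) * (1 + e))"
    using pos by (simp add: pos_less_divide_eq)
  then have "0 < \<kappa>"
    by (simp add: \<kappa>_def)
  have "0 \<le> ?C"
    using pos gap B by simp
  then have C_bound: "\<kappa> + 15/4 \<le> ?C * kepler_radius e t" for t
    using mult_left_mono[OF kepler_radius_ge[OF e, of t] \<open>0 \<le> ?C\<close>] by (simp add: \<kappa>_def)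
  have T_ge: "\<kappa> * ?Z \<le> ?T"
    by (rule tangential_part_coercive[OF e]) (rule C_bound)
  have Z: "0 \<le> ?Z"
    by (intro integral_square_nonneg continuous_intros)
  have T_nonneg: "0 \<le> ?T"
    using T_ge Z \<open>0 < \<kappa>\<close> by (meson order_trans mult_nonneg_nonneg less_imp_le)
  have T_zero: "\<forall>t\<in>{0..2*pi}. z1 t = 0" if "?T = 0"
  proof -
    have "?Z = 0"
      using T_ge Z \<open>0 < \<kappa>\<close> that by (simp add: mult_le_0_iff)
    then show ?thesis
      by (intro integral_square_eq_0_imp continuous_intros) simp_all
  qed
  note tangential = qform_nonneg_if_tangential_part[OF e B T_nonneg T_zero]
  show "0 \<le> qform e A B"
    by (rule tangential(1))
  show "qform e A B = 0 \<Longrightarrow> \<forall>t\<in>{0..2*pi}. x1 t = 0 \<and> x2 t = 0"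
    by (rule tangential(2))
qed

end

section \<open>The operator and its eigenfunctions\<close>

definition cinner :: "complex \<times> complex \<Rightarrow> complex \<times> complex \<Rightarrow> complex" where
  "cinner u v = fst u * cnj (fst v) + snd u * cnj (snd v)"

definition A_op :: "real \<Rightarrow> real \<Rightarrow> real \<Rightarrow> real \<Rightarrow> complex \<times> complex \<Rightarrow> complex \<times> complex
    \<Rightarrow> complex \<times> complex" where
  "A_op \<alpha> \<beta> e t v v'' = - v'' - v + pot \<alpha> \<beta> e t v"

definition cqform :: "real \<Rightarrow> real \<Rightarrow> real \<Rightarrow> (real \<Rightarrow> complex \<times> complex)
    \<Rightarrow> (real \<Rightarrow> complex \<times> complex) \<Rightarrow> real" where
  "cqform \<alpha> \<beta> e y y'' = integral {0..2*pi} (\<lambda>t. Re (cinner (A_op \<alpha> \<beta> e t (y t) (y'' t)) (y t)))"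

lemma Re_cinner_A_op:
  "Re (cinner (A_op \<alpha> \<beta> e t v v'') v)
    = (- Re (fst v'') * Re (fst v) - Re (snd v'') * Re (snd v) - (Re (fst v))^2 - (Re (snd v))^2
        + kepler_radius e t * ((1 + \<alpha> + 3 * \<beta>) * (cos t * Re (fst v) + sin t * Re (snd v))^2
          + (1 + \<alpha> - 3 * \<beta>) * (- sin t * Re (fst v) + cos t * Re (snd v))^2))
    + (- Im (fst v'') * Im (fst v) - Im (snd v'') * Im (snd v) - (Im (fst v))^2 - (Im (snd v))^2
        + kepler_radius e t * ((1 + \<alpha> + 3 * \<beta>) * (cos t * Im (fst v) + sin t * Im (snd v))^2
          + (1 + \<alpha> - 3 * \<beta>) * (- sin t * Im (fst v) + cos t * Im (snd v))^2))"
proof -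
  have "Re ((- d1 - v1 + (of_real (k * (A * c^2 + B * s^2)) * v1 + of_real (k * (A - B) * c * s) * v2))
        * cnj v1
      + (- d2 - v2 + (of_real (k * (A - B) * c * s) * v1 + of_real (k * (A * s^2 + B * c^2)) * v2))
        * cnj v2)
    = (- Re d1 * Re v1 - Re d2 * Re v2 - (Re v1)^2 - (Re v2)^2
        + k * (A * (c * Re v1 + s * Re v2)^2 + B * (- s * Re v1 + c * Re v2)^2))
    + (- Im d1 * Im v1 - Im d2 * Im v2 - (Im v1)^2 - (Im v2)^2
        + k * (A * (c * Im v1 + s * Im v2)^2 + B * (- s * Im v1 + c * Im v2)^2))"
    for d1 d2 v1 v2 :: complex and k A B c s :: real
    by (simp add: algebra_simps power2_eq_square)
  from this[of "fst v''" "fst v" "1 / (1 + e * cos t)" "1 + \<alpha> + 3 * \<beta>" "cos t" "1 + \<alpha> - 3 * \<beta>"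
      "sin t" "snd v" "snd v''"]
  show ?thesis
    unfolding cinner_def A_op_def pot_def Let_def kepler_radius_def by simp
qed

lemma has_real_derivative_components:
  assumes "(f has_vector_derivative f') F"
  shows "((\<lambda>t. Re (fst (f t))) has_real_derivative Re (fst f')) F"
    and "((\<lambda>t. Re (snd (f t))) has_real_derivative Re (snd f')) F"
    and "((\<lambda>t. Im (fst (f t))) has_real_derivative Im (fst f')) F"
    and "((\<lambda>t. Im (snd (f t))) has_real_derivative Im (snd f')) F"
  unfolding has_real_derivative_iff_has_vector_derivative
  using bounded_linear_compose[OF bounded_linear_Re bounded_linear_fst]
    bounded_linear_compose[OF bounded_linear_Re bounded_linear_snd]
    bounded_linear_compose[OF bounded_linear_Im bounded_linear_fst]
    bounded_linear_compose[OF bounded_linear_Im bounded_linear_snd]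
  by (auto dest: bounded_linear.has_vector_derivative[OF _ assms])

locale antiperiodic_C2 =
  fixes y y' y'' :: "real \<Rightarrow> complex \<times> complex"
  assumes y': "\<And>t. t \<in> {0..2*pi} \<Longrightarrow> (y has_vector_derivative y' t) (at t within {0..2*pi})"
    and y'': "\<And>t. t \<in> {0..2*pi} \<Longrightarrow> (y' has_vector_derivative y'' t) (at t within {0..2*pi})"
    and y''_cont: "continuous_on {0..2*pi} y''"
    and antiperiodic: "y (2*pi) = - y 0" "y' (2*pi) = - y' 0"
begin

lemma continuous_on_y [continuous_intros]:
  "continuous_on {0..2*pi} y" "continuous_on {0..2*pi} y'" "continuous_on {0..2*pi} y''"
proof -
  show "continuous_on {0..2*pi} y"
    using y' by (rule continuous_on_vector_derivative)
  show "continuous_on {0..2*pi} y'"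
    using y'' by (rule continuous_on_vector_derivative)
qed (rule y''_cont)

sublocale re: antiperiodic_curve "\<lambda>t. Re (fst (y t))" "\<lambda>t. Re (snd (y t))"
  "\<lambda>t. Re (fst (y' t))" "\<lambda>t. Re (snd (y' t))" "\<lambda>t. Re (fst (y'' t))" "\<lambda>t. Re (snd (y'' t))"
  using antiperiodic
  by unfold_locales (auto intro!: has_real_derivative_components y' y'' continuous_intros)

sublocale im: antiperiodic_curve "\<lambda>t. Im (fst (y t))" "\<lambda>t. Im (snd (y t))"
  "\<lambda>t. Im (fst (y' t))" "\<lambda>t. Im (snd (y' t))" "\<lambda>t. Im (fst (y'' t))" "\<lambda>t. Im (snd (y'' t))"
  using antiperiodic
  by unfold_locales (auto intro!: has_real_derivative_components y' y'' continuous_intros)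

lemma cqform_eq_re_im:
  assumes "0 \<le> e" "e < 1"
  shows "cqform \<alpha> \<beta> e y y''
    = re.qform e (1 + \<alpha> + 3 * \<beta>) (1 + \<alpha> - 3 * \<beta>) + im.qform e (1 + \<alpha> + 3 * \<beta>) (1 + \<alpha> - 3 * \<beta>)"
proof -
  have "Re (cinner (A_op \<alpha> \<beta> e t (y t) (y'' t)) (y t))
    = re.qform_density e (1 + \<alpha> + 3 * \<beta>) (1 + \<alpha> - 3 * \<beta>) t
      + im.qform_density e (1 + \<alpha> + 3 * \<beta>) (1 + \<alpha> - 3 * \<beta>) t" for t
    unfolding Re_cinner_A_op re.qform_density_def im.qform_density_def re.z1_def re.z2_def
      im.z1_def im.z2_def by (rule refl)
  then have "cqform \<alpha> \<beta> e y y'' = integral {0..2*pi}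
      (\<lambda>t. re.qform_density e (1 + \<alpha> + 3 * \<beta>) (1 + \<alpha> - 3 * \<beta>) t
        + im.qform_density e (1 + \<alpha> + 3 * \<beta>) (1 + \<alpha> - 3 * \<beta>) t)"
    unfolding cqform_def by (simp only:)
  also have "\<dots> = re.qform e (1 + \<alpha> + 3 * \<beta>) (1 + \<alpha> - 3 * \<beta>) + im.qform e (1 + \<alpha> + 3 * \<beta>) (1 + \<alpha> - 3 * \<beta>)"
    unfolding re.qform_def im.qform_def
    by (rule integral_add[OF re.qform_density_integrable[OF assms] im.qform_density_integrable[OF assms]])
  finally show ?thesis .
qed

lemma cqform_nonneg_if_parts:
  assumes e: "0 \<le> e" "e < 1"
    and re: "0 \<le> re.qform e (1 + \<alpha> + 3 * \<beta>) (1 + \<alpha> - 3 * \<beta>)"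
      "re.qform e (1 + \<alpha> + 3 * \<beta>) (1 + \<alpha> - 3 * \<beta>) = 0
        \<Longrightarrow> \<forall>t\<in>{0..2*pi}. Re (fst (y t)) = 0 \<and> Re (snd (y t)) = 0"
    and im: "0 \<le> im.qform e (1 + \<alpha> + 3 * \<beta>) (1 + \<alpha> - 3 * \<beta>)"
      "im.qform e (1 + \<alpha> + 3 * \<beta>) (1 + \<alpha> - 3 * \<beta>) = 0
        \<Longrightarrow> \<forall>t\<in>{0..2*pi}. Im (fst (y t)) = 0 \<and> Im (snd (y t)) = 0"
  shows "0 \<le> cqform \<alpha> \<beta> e y y''" and "cqform \<alpha> \<beta> e y y'' = 0 \<Longrightarrow> \<forall>t\<in>{0..2*pi}. y t = 0"
proof -
  note q = cqform_eq_re_im[OF e, of \<alpha> \<beta>]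
  show "0 \<le> cqform \<alpha> \<beta> e y y''"
    using q re(1) im(1) by linarith
  assume "cqform \<alpha> \<beta> e y y'' = 0"
  then have "re.qform e (1 + \<alpha> + 3 * \<beta>) (1 + \<alpha> - 3 * \<beta>) = 0"
    "im.qform e (1 + \<alpha> + 3 * \<beta>) (1 + \<alpha> - 3 * \<beta>) = 0"
    using q re(1) im(1) by linarith+
  then have "Re (fst (y t)) = 0 \<and> Re (snd (y t)) = 0 \<and> Im (fst (y t)) = 0 \<and> Im (snd (y t)) = 0"
    if "t \<in> {0..2*pi}" for t
    using re(2) im(2) that by blast
  then show "\<forall>t\<in>{0..2*pi}. y t = 0"
    by (simp add: prod_eq_iff complex_eq_iff)
qed

theorem cqform_nonneg_if_fst_vanishes:
  assumes e: "0 \<le> e" "e < 1"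
    and B: "0 \<le> 1 + \<alpha> - 3 * \<beta>" "1 + \<alpha> - 3 * \<beta> < 1" and "\<beta> \<le> \<alpha>"
    and zeros: "fst (y 0) = 0" "fst (y pi) = 0"
  shows "0 \<le> cqform \<alpha> \<beta> e y y''" and "cqform \<alpha> \<beta> e y y'' = 0 \<Longrightarrow> \<forall>t\<in>{0..2*pi}. y t = 0"
proof -
  have A: "3 - 2 * (1 + \<alpha> - 3 * \<beta>) \<le> 1 + \<alpha> + 3 * \<beta>"
    using \<open>\<beta> \<le> \<alpha>\<close> by simp
  have "Re (fst (y 0)) = 0" "Re (fst (y pi)) = 0" "Im (fst (y 0)) = 0" "Im (fst (y pi)) = 0"
    using zeros by simp_all
  note parts = cqform_nonneg_if_parts[OF e re.qform_nonneg_if_x1_vanishes[OF e B A this(1,2)]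
      im.qform_nonneg_if_x1_vanishes[OF e B A this(3,4)]]
  show "0 \<le> cqform \<alpha> \<beta> e y y''"
    by (rule parts(1))
  show "cqform \<alpha> \<beta> e y y'' = 0 \<Longrightarrow> \<forall>t\<in>{0..2*pi}. y t = 0"
    by (rule parts(2))
qed

theorem cqform_nonneg_if_A_large:
  assumes e: "0 \<le> e" "e < 1"
    and B: "0 \<le> 1 + \<alpha> - 3 * \<beta>" "1 + \<alpha> - 3 * \<beta> < 1"
    and A: "(1 + \<alpha> - 3 * \<beta>) + 15/4 * (1 + e) * (1 - (1 + \<alpha> - 3 * \<beta>)) < 1 + \<alpha> + 3 * \<beta>"
  shows "0 \<le> cqform \<alpha> \<beta> e y y''" and "cqform \<alpha> \<beta> e y y'' = 0 \<Longrightarrow> \<forall>t\<in>{0..2*pi}. y t = 0"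
proof -
  note parts = cqform_nonneg_if_parts[OF e re.qform_nonneg_if_A_large[OF e B A]
      im.qform_nonneg_if_A_large[OF e B A]]
  show "0 \<le> cqform \<alpha> \<beta> e y y''"
    by (rule parts(1))
  show "cqform \<alpha> \<beta> e y y'' = 0 \<Longrightarrow> \<forall>t\<in>{0..2*pi}. y t = 0"
    by (rule parts(2))
qed

end

lemma continuous_on_pot [continuous_intros]:
  assumes "0 \<le> e" "e < 1" "continuous_on S y"
  shows "continuous_on S (\<lambda>t. pot \<alpha> \<beta> e t (y t))"
  unfolding pot_def Let_def using assms kepler_denom_pos[OF assms(1,2)]
  by (intro continuous_intros) (auto simp: less_imp_neq[symmetric])

lemma is_eigfun_imp_antiperiodic_C2:
  assumes e: "0 \<le> e" "e < 1" and "is_eigfun \<alpha> \<beta> e lam y"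
  obtains y' y'' where "antiperiodic_C2 y y' y''"
    and "\<And>t. t \<in> {0..2*pi} \<Longrightarrow> A_op \<alpha> \<beta> e t (y t) (y'' t) = lam *\<^sub>R y t"
    and "\<And>t. t \<notin> {0..2*pi} \<Longrightarrow> y t = 0"
proof -
  obtain y' y'' where y': "\<And>t. t \<in> {0..2*pi} \<Longrightarrow> (y has_vector_derivative y' t) (at t within {0..2*pi})"
    and y'': "\<And>t. t \<in> {0..2*pi} \<Longrightarrow> (y' has_vector_derivative y'' t) (at t within {0..2*pi})"
    and anti: "y (2*pi) = - y 0" "y' (2*pi) = - y' 0"
    and eq: "\<And>t. t \<in> {0..2*pi} \<Longrightarrow> - y'' t - y t + pot \<alpha> \<beta> e t (y t) = lam *\<^sub>R y t"
    and outside: "\<And>t. t \<notin> {0..2*pi} \<Longrightarrow> y t = 0"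
    using \<open>is_eigfun \<alpha> \<beta> e lam y\<close> unfolding is_eigfun_def by blast
  have y_cont: "continuous_on {0..2*pi} y"
    using y' by (rule continuous_on_vector_derivative)
  have "continuous_on {0..2*pi} (\<lambda>t. pot \<alpha> \<beta> e t (y t) - y t - lam *\<^sub>R y t)"
    using e y_cont by (intro continuous_intros)
  moreover have "pot \<alpha> \<beta> e t (y t) - y t - lam *\<^sub>R y t = y'' t" if "t \<in> {0..2*pi}" for t
    using eq[OF that] by (simp add: algebra_simps)
  ultimately have "continuous_on {0..2*pi} y''"
    using continuous_on_eq by blast
  with y' y'' anti have "antiperiodic_C2 y y' y''"
    by unfold_locales
  then show ?thesis
    using that eq outside by (simp add: A_op_def)
qed

lemma cinner_has_vector_derivative:
  assumes "(u has_vector_derivative u') (at t within S)" "(v has_vector_derivative v') (at t within S)"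
  shows "((\<lambda>t. cinner (u t) (v t)) has_vector_derivative cinner (u t) v' + cinner u' (v t))
    (at t within S)"
proof -
  have "((\<lambda>t. fst (f t)) has_vector_derivative fst f') F"
    and "((\<lambda>t. snd (f t)) has_vector_derivative snd f') F"
    if "(f has_vector_derivative f') F" for f :: "real \<Rightarrow> complex \<times> complex" and f' F
    using bounded_linear.has_vector_derivative[OF bounded_linear_fst that]
      bounded_linear.has_vector_derivative[OF bounded_linear_snd that] by auto
  note components = this[OF assms(1)] this[OF assms(2)]
  show ?thesis
    unfolding cinner_def by (rule derivative_eq_intros components refl)+ (simp add: algebra_simps)
qed

lemma continuous_on_cinner [continuous_intros]:
  "continuous_on S u \<Longrightarrow> continuous_on S v \<Longrightarrow> continuous_on S (\<lambda>t. cinner (u t) (v t))"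
  unfolding cinner_def by (intro continuous_intros)

lemma cinner_pot_sym: "cinner (pot \<alpha> \<beta> e t u) v = cinner u (pot \<alpha> \<beta> e t v)"
  unfolding cinner_def pot_def Let_def by (simp add: algebra_simps)

lemma cinner_A_op:
  "cinner (A_op \<alpha> \<beta> e t v v'') w = - cinner v'' w - cinner v w + cinner (pot \<alpha> \<beta> e t v) w"
  "cinner w (A_op \<alpha> \<beta> e t v v'') = - cinner w v'' - cinner w v + cinner w (pot \<alpha> \<beta> e t v)"
  unfolding cinner_def A_op_def by (simp_all add: algebra_simps)

lemma cinner_scaleR:
  "cinner (r *\<^sub>R u) v = of_real r * cinner u v" "cinner u (r *\<^sub>R v) = of_real r * cinner u v"
  unfolding cinner_def by (simp_all add: scaleR_conv_of_real algebra_simps)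

text \<open>Integration by parts twice; antiperiodicity makes every boundary term vanish.\<close>
lemma integral_cinner_A_op_symmetric:
  assumes e: "0 \<le> e" "e < 1" and "antiperiodic_C2 y y' y''" "antiperiodic_C2 z z' z''"
  shows "integral {0..2*pi} (\<lambda>t. cinner (A_op \<alpha> \<beta> e t (y t) (y'' t)) (z t))
    = integral {0..2*pi} (\<lambda>t. cinner (y t) (A_op \<alpha> \<beta> e t (z t) (z'' t)))"
proof -
  interpret y: antiperiodic_C2 y y' y'' by fact
  interpret z: antiperiodic_C2 z z' z'' by fact
  define I where "I u v = integral {0..2*pi} (\<lambda>t. cinner (u t) (v t))"
    for u v :: "real \<Rightarrow> complex \<times> complex"
  have I: "((\<lambda>t. cinner (u t) (v t)) has_integral I u v) {0..2*pi}"
    if "continuous_on {0..2*pi} u" "continuous_on {0..2*pi} v" for u v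
    unfolding I_def using that by (intro integrable_integral integrable_continuous_real continuous_intros)
  note y_cont = y.continuous_on_y and z_cont = z.continuous_on_y
  have "((\<lambda>t. cinner (y' t) (z' t) + cinner (y'' t) (z t)) has_integral
      cinner (y' (2*pi)) (z (2*pi)) - cinner (y' 0) (z 0)) {0..2*pi}"
    by (rule fundamental_theorem_of_calculus) (auto intro!: cinner_has_vector_derivative y.y'' z.y')
  then have "I y' z' + I y'' z = 0"
    using has_integral_add[OF I[OF y_cont(2) z_cont(2)] I[OF y_cont(3) z_cont(1)]]
    by (simp add: y.antiperiodic z.antiperiodic cinner_def has_integral_unique)
  moreover have "((\<lambda>t. cinner (y t) (z'' t) + cinner (y' t) (z' t)) has_integral
      cinner (y (2*pi)) (z' (2*pi)) - cinner (y 0) (z' 0)) {0..2*pi}"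
    by (rule fundamental_theorem_of_calculus) (auto intro!: cinner_has_vector_derivative y.y' z.y'')
  then have "I y z'' + I y' z' = 0"
    using has_integral_add[OF I[OF y_cont(1) z_cont(3)] I[OF y_cont(2) z_cont(2)]]
    by (simp add: y.antiperiodic z.antiperiodic cinner_def has_integral_unique)
  ultimately have by_parts: "I y'' z = I y z''"
    by (metis add.commute add_right_cancel)
  define P where "P = integral {0..2*pi} (\<lambda>t. cinner (pot \<alpha> \<beta> e t (y t)) (z t))"
  have P: "((\<lambda>t. cinner (pot \<alpha> \<beta> e t (y t)) (z t)) has_integral P) {0..2*pi}"
    unfolding P_def using e by (intro integrable_integral integrable_continuous_real continuous_intros)
  have "((\<lambda>t. cinner (A_op \<alpha> \<beta> e t (y t) (y'' t)) (z t)) has_integral - I y'' z - I y z + P) {0..2*pi}"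
    unfolding cinner_A_op
    by (intro has_integral_add has_integral_diff has_integral_neg I P y_cont z_cont)
  moreover have "((\<lambda>t. cinner (y t) (A_op \<alpha> \<beta> e t (z t) (z'' t))) has_integral - I y z'' - I y z + P)
      {0..2*pi}"
    unfolding cinner_A_op cinner_pot_sym[symmetric]
    by (intro has_integral_add has_integral_diff has_integral_neg I P y_cont z_cont)
  ultimately show ?thesis
    using by_parts by (simp add: integral_unique)
qed

definition lincomb :: "(nat \<Rightarrow> complex) \<Rightarrow> nat set \<Rightarrow> (nat \<Rightarrow> complex \<times> complex) \<Rightarrow> complex \<times> complex"
  where "lincomb c I v = (\<Sum>i\<in>I. c i * fst (v i), \<Sum>i\<in>I. c i * snd (v i))"

lemma cinner_lincomb:
  "cinner (lincomb a I u) (lincomb b J v) = (\<Sum>i\<in>I. \<Sum>j\<in>J. a i * cnj (b j) * cinner (u i) (v j))"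
  by (simp add: cinner_def lincomb_def cnj_sum sum_product sum.distrib[symmetric] algebra_simps)

lemma lincomb_scaleR: "lincomb c I (\<lambda>i. r i *\<^sub>R v i) = lincomb (\<lambda>i. c i * of_real (r i)) I v"
  by (simp add: lincomb_def scaleR_conv_of_real mult.assoc)

lemma A_op_lincomb:
  "A_op \<alpha> \<beta> e t (lincomb c I v) (lincomb c I v'') = lincomb c I (\<lambda>i. A_op \<alpha> \<beta> e t (v i) (v'' i))"
proof -
  obtain k11 k12 k22 where pot: "\<And>w. pot \<alpha> \<beta> e t w = (k11 * fst w + k12 * snd w, k12 * fst w + k22 * snd w)"
    unfolding pot_def Let_def by blast
  show ?thesis
    unfolding A_op_def pot lincomb_def
    by (simp add: sum_distrib_left sum.distrib sum_subtractf sum_negf algebra_simps)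
qed

lemma antiperiodic_C2_lincomb:
  assumes "\<And>i. i \<in> I \<Longrightarrow> antiperiodic_C2 (ys i) (ys' i) (ys'' i)"
  shows "antiperiodic_C2 (\<lambda>t. lincomb c I (\<lambda>i. ys i t)) (\<lambda>t. lincomb c I (\<lambda>i. ys' i t))
    (\<lambda>t. lincomb c I (\<lambda>i. ys'' i t))"
proof
  have fst_snd: "((\<lambda>t. fst (f t)) has_vector_derivative fst f') F"
    "((\<lambda>t. snd (f t)) has_vector_derivative snd f') F"
    if "(f has_vector_derivative f') F" for f :: "real \<Rightarrow> complex \<times> complex" and f' F
    using bounded_linear.has_vector_derivative[OF bounded_linear_fst that]
      bounded_linear.has_vector_derivative[OF bounded_linear_snd that] by auto
  have derivs: "(ys i has_vector_derivative ys' i t) (at t within {0..2*pi})"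
    "(ys' i has_vector_derivative ys'' i t) (at t within {0..2*pi})"
    if "i \<in> I" "t \<in> {0..2*pi}" for i t
    using antiperiodic_C2.y'[OF assms[OF that(1)] that(2)] antiperiodic_C2.y''[OF assms[OF that(1)] that(2)]
    by auto
  show "((\<lambda>t. lincomb c I (\<lambda>i. ys i t)) has_vector_derivative lincomb c I (\<lambda>i. ys' i t))
      (at t within {0..2*pi})"
    "((\<lambda>t. lincomb c I (\<lambda>i. ys' i t)) has_vector_derivative lincomb c I (\<lambda>i. ys'' i t))
      (at t within {0..2*pi})" if "t \<in> {0..2*pi}" for t
    unfolding lincomb_def using assms that
    by (auto intro!: has_vector_derivative_Pair has_vector_derivative_sum
        has_vector_derivative_mult_right fst_snd derivs)
  show "continuous_on {0..2*pi} (\<lambda>t. lincomb c I (\<lambda>i. ys'' i t))"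
    unfolding lincomb_def using assms
    by (intro continuous_on_Pair continuous_on_sum continuous_intros)
      (auto dest: antiperiodic_C2.y''_cont)
  show "lincomb c I (\<lambda>i. ys i (2*pi)) = - lincomb c I (\<lambda>i. ys i 0)"
    "lincomb c I (\<lambda>i. ys' i (2*pi)) = - lincomb c I (\<lambda>i. ys' i 0)"
  proof -
    have "ys i (2*pi) = - ys i 0" "ys' i (2*pi) = - ys' i 0" if "i \<in> I" for i
      using antiperiodic_C2.antiperiodic[OF assms[OF that]] by auto
    then show "lincomb c I (\<lambda>i. ys i (2*pi)) = - lincomb c I (\<lambda>i. ys i 0)"
      "lincomb c I (\<lambda>i. ys' i (2*pi)) = - lincomb c I (\<lambda>i. ys' i 0)"
      by (simp_all add: lincomb_def sum_negf[symmetric] cong: sum.cong)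
  qed
qed

lemma Re_cinner_self_nonneg: "0 \<le> Re (cinner v v)"
  by (simp add: cinner_def)

lemma eigfuns_orthogonal:
  assumes e: "0 \<le> e" "e < 1"
    and y: "antiperiodic_C2 y y' y''" "\<And>t. t \<in> {0..2*pi} \<Longrightarrow> A_op \<alpha> \<beta> e t (y t) (y'' t) = lam *\<^sub>R y t"
    and z: "antiperiodic_C2 z z' z''" "\<And>t. t \<in> {0..2*pi} \<Longrightarrow> A_op \<alpha> \<beta> e t (z t) (z'' t) = mu *\<^sub>R z t"
  shows "of_real lam * integral {0..2*pi} (\<lambda>t. cinner (y t) (z t))
    = of_real mu * integral {0..2*pi} (\<lambda>t. cinner (y t) (z t))"
proof -
  have "of_real lam * integral {0..2*pi} (\<lambda>t. cinner (y t) (z t))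
      = integral {0..2*pi} (\<lambda>t. cinner (A_op \<alpha> \<beta> e t (y t) (y'' t)) (z t))"
    by (subst integral_cong[where g = "\<lambda>t. of_real lam * cinner (y t) (z t)"])
      (simp_all add: y(2) cinner_scaleR)
  also have "\<dots> = integral {0..2*pi} (\<lambda>t. cinner (y t) (A_op \<alpha> \<beta> e t (z t) (z'' t)))"
    using e y(1) z(1) by (rule integral_cinner_A_op_symmetric)
  also have "\<dots> = of_real mu * integral {0..2*pi} (\<lambda>t. cinner (y t) (z t))"
    by (subst integral_cong[where g = "\<lambda>t. of_real mu * cinner (y t) (z t)"])
      (simp_all add: z(2) cinner_scaleR)
  finally show ?thesis .
qed

text \<open>For real weights \<open>\<lambda>\<^sub>i \<le> 0\<close> with \<open>\<lambda>\<^sub>i G\<^sub>i\<^sub>j = \<lambda>\<^sub>j G\<^sub>i\<^sub>j\<close>, either \<open>G\<^sub>i\<^sub>j = 0\<close> or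
  \<open>\<lambda>\<^sub>i = - \<surd>(- \<lambda>\<^sub>i) \<surd>(- \<lambda>\<^sub>j)\<close>.\<close>
lemma weighted_gram_sum_eq:
  fixes lam :: "nat \<Rightarrow> real" and G :: "nat \<Rightarrow> nat \<Rightarrow> complex"
  assumes orth: "\<And>i j. i \<in> I \<Longrightarrow> j \<in> I \<Longrightarrow> of_real (lam i) * G i j = of_real (lam j) * G i j"
    and nonpos: "\<And>i. i \<in> I \<Longrightarrow> lam i \<le> 0"
  shows "(\<Sum>i\<in>I. \<Sum>j\<in>I. c i * of_real (lam i) * cnj (c j) * G i j)
    = - (\<Sum>i\<in>I. \<Sum>j\<in>I. (c i * of_real (sqrt (- lam i))) * cnj (c j * of_real (sqrt (- lam j))) * G i j)"
proof -
  have "of_real (lam i) * G i j = - of_real (sqrt (- lam i) * sqrt (- lam j)) * G i j"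
    if "i \<in> I" "j \<in> I" for i j
  proof (cases "G i j = 0")
    case False
    then have "lam i = lam j"
      using orth[OF that] by simp
    then show ?thesis
      using nonpos[OF that(1)] by simp
  qed simp
  then have "c i * of_real (lam i) * cnj (c j) * G i j
      = - ((c i * of_real (sqrt (- lam i))) * cnj (c j * of_real (sqrt (- lam j))) * G i j)"
    if "i \<in> I" "j \<in> I" for i j
    using that by (simp add: algebra_simps)
  then show ?thesis
    by (simp add: sum_negf cong: sum.cong)
qed

lemma A_op_lincomb_eigfuns:
  assumes "\<And>i. i \<in> I \<Longrightarrow> A_op \<alpha> \<beta> e t (ys i t) (ys'' i t) = lam i *\<^sub>R ys i t"
  shows "A_op \<alpha> \<beta> e t (lincomb c I (\<lambda>i. ys i t)) (lincomb c I (\<lambda>i. ys'' i t))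
    = lincomb (\<lambda>i. c i * of_real (lam i)) I (\<lambda>i. ys i t)"
proof -
  have "A_op \<alpha> \<beta> e t (lincomb c I (\<lambda>i. ys i t)) (lincomb c I (\<lambda>i. ys'' i t))
      = lincomb c I (\<lambda>i. A_op \<alpha> \<beta> e t (ys i t) (ys'' i t))"
    by (rule A_op_lincomb)
  also have "\<dots> = lincomb c I (\<lambda>i. lam i *\<^sub>R ys i t)"
    using assms by (simp add: lincomb_def cong: sum.cong)
  finally show ?thesis
    by (simp only: lincomb_scaleR)
qed

text \<open>By orthogonality, on the span of eigenfunctions with eigenvalues \<open>\<lambda>\<^sub>i \<le> 0\<close> the form equals
  \<open>- \<integral> |\<Sum> c\<^sub>i \<surd>(- \<lambda>\<^sub>i) y\<^sub>i|\<^sup>2\<close>.\<close>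
lemma cqform_lincomb_eigfuns_nonpos:
  assumes e: "0 \<le> e" "e < 1" and "finite I"
    and C2: "\<And>i. i \<in> I \<Longrightarrow> antiperiodic_C2 (ys i) (ys' i) (ys'' i)"
    and eig: "\<And>i t. i \<in> I \<Longrightarrow> t \<in> {0..2*pi} \<Longrightarrow> A_op \<alpha> \<beta> e t (ys i t) (ys'' i t) = lam i *\<^sub>R ys i t"
    and nonpos: "\<And>i. i \<in> I \<Longrightarrow> lam i \<le> 0"
  shows "cqform \<alpha> \<beta> e (\<lambda>t. lincomb c I (\<lambda>i. ys i t)) (\<lambda>t. lincomb c I (\<lambda>i. ys'' i t)) \<le> 0"
proof -
  define G where "G i j = integral {0..2*pi} (\<lambda>t. cinner (ys i t) (ys j t))" for i j
  define a where "a i = c i * of_real (sqrt (- lam i))" for i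
  have G: "((\<lambda>t. cinner (ys i t) (ys j t)) has_integral G i j) {0..2*pi}" if "i \<in> I" "j \<in> I" for i j
    unfolding G_def
    using antiperiodic_C2.continuous_on_y(1)[OF C2[OF that(1)]]
      antiperiodic_C2.continuous_on_y(1)[OF C2[OF that(2)]]
    by (intro integrable_integral integrable_continuous_real continuous_on_cinner)
  have sums: "((\<lambda>t. \<Sum>i\<in>I. \<Sum>j\<in>I. b i j * cinner (ys i t) (ys j t)) has_integral
      (\<Sum>i\<in>I. \<Sum>j\<in>I. b i j * G i j)) {0..2*pi}" for b
    by (intro has_integral_sum has_integral_mult_right G \<open>finite I\<close>)
  have orth: "of_real (lam i) * G i j = of_real (lam j) * G i j" if "i \<in> I" "j \<in> I" for i j
    unfolding G_def
    using eigfuns_orthogonal[OF e C2[OF that(1)] eig[OF that(1)] C2[OF that(2)] eig[OF that(2)]] .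
  have A_w: "A_op \<alpha> \<beta> e t (lincomb c I (\<lambda>i. ys i t)) (lincomb c I (\<lambda>i. ys'' i t))
      = lincomb (\<lambda>i. c i * of_real (lam i)) I (\<lambda>i. ys i t)" if "t \<in> {0..2*pi}" for t
    by (rule A_op_lincomb_eigfuns) (rule eig[OF _ that])
  have "((\<lambda>t. Re (cinner (A_op \<alpha> \<beta> e t (lincomb c I (\<lambda>i. ys i t)) (lincomb c I (\<lambda>i. ys'' i t)))
      (lincomb c I (\<lambda>i. ys i t)))) has_integral
      Re (\<Sum>i\<in>I. \<Sum>j\<in>I. c i * of_real (lam i) * cnj (c j) * G i j)) {0..2*pi}"
    using has_integral_Re[OF sums[of "\<lambda>i j. c i * of_real (lam i) * cnj (c j)"]]
    by (rule has_integral_eq[rotated]) (simp add: A_w cinner_lincomb)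
  then have "cqform \<alpha> \<beta> e (\<lambda>t. lincomb c I (\<lambda>i. ys i t)) (\<lambda>t. lincomb c I (\<lambda>i. ys'' i t))
      = Re (\<Sum>i\<in>I. \<Sum>j\<in>I. c i * of_real (lam i) * cnj (c j) * G i j)"
    unfolding cqform_def by (rule integral_unique)
  also have "\<dots> = - Re (\<Sum>i\<in>I. \<Sum>j\<in>I. a i * cnj (a j) * G i j)"
    by (subst weighted_gram_sum_eq[OF orth nonpos]) (simp_all add: a_def)
  finally have "cqform \<alpha> \<beta> e (\<lambda>t. lincomb c I (\<lambda>i. ys i t)) (\<lambda>t. lincomb c I (\<lambda>i. ys'' i t))
      = - Re (\<Sum>i\<in>I. \<Sum>j\<in>I. a i * cnj (a j) * G i j)" .
  moreover have "((\<lambda>t. Re (cinner (lincomb a I (\<lambda>i. ys i t)) (lincomb a I (\<lambda>i. ys i t)))) has_integral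
      Re (\<Sum>i\<in>I. \<Sum>j\<in>I. a i * cnj (a j) * G i j)) {0..2*pi}"
    unfolding cinner_lincomb by (rule has_integral_Re[OF sums])
  then have "0 \<le> Re (\<Sum>i\<in>I. \<Sum>j\<in>I. a i * cnj (a j) * G i j)"
    by (rule has_integral_nonneg) (rule Re_cinner_self_nonneg)
  ultimately show ?thesis
    by simp
qed

section \<open>Morse index and nullity\<close>

lemma exists_nontrivial_solution_2x3:
  fixes a b :: "nat \<Rightarrow> complex"
  obtains c where "c 0 \<noteq> 0 \<or> c 1 \<noteq> 0 \<or> c 2 \<noteq> 0" "(\<Sum>i<3. c i * a i) = 0" "(\<Sum>i<3. c i * b i) = 0"
proof -
  have "\<exists>x y z. (x \<noteq> 0 \<or> y \<noteq> 0 \<or> z \<noteq> 0)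
      \<and> x * a 0 + y * a 1 + z * a 2 = 0 \<and> x * b 0 + y * b 1 + z * b 2 = 0"
  proof (cases "a 1 * b 2 - a 2 * b 1 \<noteq> 0 \<or> a 2 * b 0 - a 0 * b 2 \<noteq> 0 \<or> a 0 * b 1 - a 1 * b 0 \<noteq> 0")
    case True
    \<comment> \<open>the cross product of \<open>a\<close> and \<open>b\<close>\<close>
    let ?x = "a 1 * b 2 - a 2 * b 1" and ?y = "a 2 * b 0 - a 0 * b 2" and ?z = "a 0 * b 1 - a 1 * b 0"
    have "?x * a 0 + ?y * a 1 + ?z * a 2 = 0" "?x * b 0 + ?y * b 1 + ?z * b 2 = 0"
      by (simp_all add: algebra_simps)
    then show ?thesis
      using True by blast
  next
    case False
    then have ab: "a 0 * b 1 = a 1 * b 0"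
      by simp
    show ?thesis
    proof (cases "a 0 \<noteq> 0 \<or> a 1 \<noteq> 0")
      case True
      have "a 1 \<noteq> 0 \<or> - a 0 \<noteq> 0 \<or> (0::complex) \<noteq> 0"
        using True by auto
      moreover have "a 1 * a 0 + (- a 0) * a 1 + 0 * a 2 = 0" "a 1 * b 0 + (- a 0) * b 1 + 0 * b 2 = 0"
        using ab by (simp_all add: algebra_simps)
      ultimately show ?thesis
        by blast
    next
      case a_zero: False
      show ?thesis
      proof (cases "b 0 \<noteq> 0 \<or> b 1 \<noteq> 0")
        case True
        have "b 1 \<noteq> 0 \<or> - b 0 \<noteq> 0 \<or> (0::complex) \<noteq> 0"
          using True by auto
        moreover have "b 1 * a 0 + (- b 0) * a 1 + 0 * a 2 = 0" "b 1 * b 0 + (- b 0) * b 1 + 0 * b 2 = 0"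
          using a_zero by (simp_all add: algebra_simps)
        ultimately show ?thesis
          by blast
      next
        case False
        have "(1::complex) \<noteq> 0 \<or> (0::complex) \<noteq> 0 \<or> (0::complex) \<noteq> 0"
          by simp
        moreover have "1 * a 0 + 0 * a 1 + 0 * a 2 = 0" "1 * b 0 + 0 * b 1 + 0 * b 2 = 0"
          using a_zero False by simp_all
        ultimately show ?thesis
          by blast
      qed
    qed
  qed
  then obtain x y z where xyz: "x \<noteq> 0 \<or> y \<noteq> 0 \<or> z \<noteq> 0"
    "x * a 0 + y * a 1 + z * a 2 = 0" "x * b 0 + y * b 1 + z * b 2 = 0"
    by blast
  have sum3: "(\<Sum>i<3. f i) = f 0 + f 1 + f 2" for f :: "nat \<Rightarrow> complex"
    by (simp add: eval_nat_numeral)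
  show ?thesis
    by (rule that[of "\<lambda>i. if i = 0 then x else if i = 1 then y else z"])
      (use xyz in \<open>simp_all add: sum3\<close>)
qed

lemma cindep_iff_lincomb:
  "cindep n ys \<longleftrightarrow> (\<forall>c. (\<forall>t. lincomb c {..<n} (\<lambda>i. ys i t) = 0) \<longrightarrow> (\<forall>i<n. c i = 0))"
  by (simp add: cindep_def lincomb_def prod_eq_iff)

lemma cindep_mono:
  assumes "cindep n ys" "m \<le> n"
  shows "cindep m ys"
  unfolding cindep_def
proof (rule allI, rule impI)
  fix c :: "nat \<Rightarrow> complex"
  assume zero: "\<forall>t. (\<Sum>i<m. c i * fst (ys i t)) = 0 \<and> (\<Sum>i<m. c i * snd (ys i t)) = 0"
  define c' where "c' i = (if i < m then c i else 0)" for i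
  have sums: "(\<Sum>i<n. c' i * f i) = (\<Sum>i<m. c i * f i)" for f :: "nat \<Rightarrow> complex"
    using \<open>m \<le> n\<close> by (intro sum.mono_neutral_cong_right) (auto simp: c'_def)
  have "\<forall>t. (\<Sum>i<n. c' i * fst (ys i t)) = 0 \<and> (\<Sum>i<n. c' i * snd (ys i t)) = 0"
    unfolding sums by (rule zero)
  then have c'_zero: "\<forall>i<n. c' i = 0"
    using assms(1) unfolding cindep_def by blast
  show "\<forall>i<m. c i = 0"
  proof (intro allI impI)
    fix i
    assume "i < m"
    then have "c' i = 0"
      using c'_zero \<open>m \<le> n\<close> by simp
    then show "c i = 0"
      using \<open>i < m\<close> by (simp add: c'_def)
  qed
qed

lemma cindep_imp_nonzero:
  assumes "cindep n ys" "i < n"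
  shows "\<exists>t. ys i t \<noteq> 0"
proof (rule ccontr)
  assume "\<nexists>t. ys i t \<noteq> 0"
  then have zero: "fst (ys i t) = 0" "snd (ys i t) = 0" for t
    by auto
  define c :: "nat \<Rightarrow> complex" where "c j = (if j = i then 1 else 0)" for j
  have sums: "(\<Sum>j<n. c j * f j) = f i" for f :: "nat \<Rightarrow> complex"
  proof -
    have "(\<Sum>j<n. c j * f j) = (\<Sum>j<n. if j = i then f j else 0)"
      by (rule sum.cong) (auto simp: c_def)
    then show ?thesis
      using \<open>i < n\<close> by simp
  qed
  have "\<forall>t. (\<Sum>j<n. c j * fst (ys j t)) = 0 \<and> (\<Sum>j<n. c j * snd (ys j t)) = 0"
    unfolding sums by (simp add: zero)
  then have "c i = 0"
    using assms unfolding cindep_def by blast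
  then show False
    by (simp add: c_def)
qed

lemma obtain_eigfun_derivatives:
  assumes e: "0 \<le> e" "e < 1" and eig: "\<And>i. i \<in> I \<Longrightarrow> \<exists>lam\<le>0. is_eigfun \<alpha> \<beta> e lam (ys i)"
  obtains L Y' Y'' where "\<And>i. i \<in> I \<Longrightarrow> L i \<le> 0"
    and "\<And>i. i \<in> I \<Longrightarrow> antiperiodic_C2 (ys i) (Y' i) (Y'' i)"
    and "\<And>i t. i \<in> I \<Longrightarrow> t \<in> {0..2*pi} \<Longrightarrow> A_op \<alpha> \<beta> e t (ys i t) (Y'' i t) = L i *\<^sub>R ys i t"
    and "\<And>i t. i \<in> I \<Longrightarrow> t \<notin> {0..2*pi} \<Longrightarrow> ys i t = 0"
proof -
  define P where "P i lam y' y'' \<longleftrightarrow> lam \<le> 0 \<and> antiperiodic_C2 (ys i) y' y''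
      \<and> (\<forall>t\<in>{0..2*pi}. A_op \<alpha> \<beta> e t (ys i t) (y'' t) = lam *\<^sub>R ys i t)
      \<and> (\<forall>t. t \<notin> {0..2*pi} \<longrightarrow> ys i t = 0)" for i lam y' y''
  have "\<forall>i\<in>I. \<exists>lam y' y''. P i lam y' y''"
  proof
    fix i
    assume "i \<in> I"
    then obtain lam where lam: "lam \<le> 0" "is_eigfun \<alpha> \<beta> e lam (ys i)"
      using eig by blast
    obtain y' y'' where "antiperiodic_C2 (ys i) y' y''"
      "\<And>t. t \<in> {0..2*pi} \<Longrightarrow> A_op \<alpha> \<beta> e t (ys i t) (y'' t) = lam *\<^sub>R ys i t"
      "\<And>t. t \<notin> {0..2*pi} \<Longrightarrow> ys i t = 0"
      using is_eigfun_imp_antiperiodic_C2[OF e lam(2)] by blast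
    then show "\<exists>lam y' y''. P i lam y' y''"
      using lam(1) unfolding P_def by blast
  qed
  from bchoice[OF this] obtain L where "\<forall>i\<in>I. \<exists>y' y''. P i (L i) y' y''"
    by blast
  from bchoice[OF this] obtain Y' where "\<forall>i\<in>I. \<exists>y''. P i (L i) (Y' i) y''"
    by blast
  from bchoice[OF this] obtain Y'' where "\<forall>i\<in>I. P i (L i) (Y' i) (Y'' i)"
    by blast
  then show ?thesis
    using that unfolding P_def by blast
qed

text \<open>A combination of three eigenfunctions can be chosen with first component vanishing at \<open>0\<close> and
  \<open>\<pi>\<close>; there the form is nonnegative, but on eigenfunctions with \<open>\<lambda> \<le> 0\<close> it is nonpositive.\<close>
theorem indep_nonpos_eigfuns_le_2:
  assumes e: "0 \<le> e" "e < 1"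
    and B: "0 \<le> 1 + \<alpha> - 3 * \<beta>" "1 + \<alpha> - 3 * \<beta> < 1" and "\<beta> \<le> \<alpha>"
    and eig: "\<forall>i<n. \<exists>lam\<le>0. is_eigfun \<alpha> \<beta> e lam (ys i)" and indep: "cindep n ys"
  shows "n \<le> 2"
proof (rule ccontr)
  assume "\<not> n \<le> 2"
  then have indep3: "cindep 3 ys"
    by (intro cindep_mono[OF indep]) simp
  obtain L Y' Y'' where L: "\<And>i. i \<in> {..<3} \<Longrightarrow> L i \<le> 0"
    and C2: "\<And>i. i \<in> {..<3} \<Longrightarrow> antiperiodic_C2 (ys i) (Y' i) (Y'' i)"
    and A: "\<And>i t. i \<in> {..<3} \<Longrightarrow> t \<in> {0..2*pi} \<Longrightarrow> A_op \<alpha> \<beta> e t (ys i t) (Y'' i t) = L i *\<^sub>R ys i t"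
    and outside: "\<And>i t. i \<in> {..<3} \<Longrightarrow> t \<notin> {0..2*pi} \<Longrightarrow> ys i t = 0"
  proof (rule obtain_eigfun_derivatives[OF e])
    show "\<exists>lam\<le>0. is_eigfun \<alpha> \<beta> e lam (ys i)" if "i \<in> {..<3}" for i
      using eig that \<open>\<not> n \<le> 2\<close> by simp
  qed (rule that)
  obtain c where c: "c 0 \<noteq> 0 \<or> c 1 \<noteq> 0 \<or> c 2 \<noteq> 0"
    "(\<Sum>i<3. c i * fst (ys i 0)) = 0" "(\<Sum>i<3. c i * fst (ys i pi)) = 0"
    by (rule exists_nontrivial_solution_2x3)
  define w where "w t = lincomb c {..<3} (\<lambda>i. ys i t)" for t
  define w' where "w' t = lincomb c {..<3} (\<lambda>i. Y' i t)" for t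
  define w'' where "w'' t = lincomb c {..<3} (\<lambda>i. Y'' i t)" for t
  have "antiperiodic_C2 w w' w''"
    unfolding w_def[abs_def] w'_def[abs_def] w''_def[abs_def]
    by (rule antiperiodic_C2_lincomb) (rule C2)
  then interpret w: antiperiodic_C2 w w' w'' .
  have "cqform \<alpha> \<beta> e w w'' \<le> 0"
    unfolding w_def[abs_def] w''_def[abs_def]
    by (rule cqform_lincomb_eigfuns_nonpos[OF e finite_lessThan, where ys' = Y' and lam = L])
      (simp_all add: C2 A L)
  moreover have "fst (w 0) = 0" "fst (w pi) = 0"
    using c by (simp_all add: w_def lincomb_def)
  note nonneg = w.cqform_nonneg_if_fst_vanishes[OF e B \<open>\<beta> \<le> \<alpha>\<close> this]
  ultimately have "cqform \<alpha> \<beta> e w w'' = 0"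
    by linarith
  then have inside: "\<forall>t\<in>{0..2*pi}. w t = 0"
    by (rule nonneg(2))
  have "lincomb c {..<3} (\<lambda>i. ys i t) = 0" for t
  proof (cases "t \<in> {0..2*pi}")
    case True
    then show ?thesis
      using inside by (simp add: w_def)
  next
    case False
    then have "ys i t = 0" if "i \<in> {..<3}" for i
      using outside that by blast
    then show ?thesis
      by (simp add: lincomb_def zero_prod_def)
  qed
  then have "\<forall>i<3. c i = 0"
    using indep3 unfolding cindep_iff_lincomb by blast
  then show False
    using c(1) by simp
qed

lemma nonpos_eigfun_eq_0:
  assumes e: "0 \<le> e" "e < 1"
    and B: "0 \<le> 1 + \<alpha> - 3 * \<beta>" "1 + \<alpha> - 3 * \<beta> < 1"
    and A: "(1 + \<alpha> - 3 * \<beta>) + 15/4 * (1 + e) * (1 - (1 + \<alpha> - 3 * \<beta>)) < 1 + \<alpha> + 3 * \<beta>"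
    and "lam \<le> 0" "is_eigfun \<alpha> \<beta> e lam y"
  shows "y t = 0"
proof -
  obtain y' y'' where C2: "antiperiodic_C2 y y' y''"
    and eq: "\<And>t. t \<in> {0..2*pi} \<Longrightarrow> A_op \<alpha> \<beta> e t (y t) (y'' t) = lam *\<^sub>R y t"
    and outside: "\<And>t. t \<notin> {0..2*pi} \<Longrightarrow> y t = 0"
    using is_eigfun_imp_antiperiodic_C2[OF e \<open>is_eigfun \<alpha> \<beta> e lam y\<close>] by blast
  interpret antiperiodic_C2 y y' y'' by (fact C2)
  have "cqform \<alpha> \<beta> e (\<lambda>t. lincomb (\<lambda>_. 1) {0} (\<lambda>_. y t)) (\<lambda>t. lincomb (\<lambda>_. 1) {0} (\<lambda>_. y'' t)) \<le> 0"
    by (rule cqform_lincomb_eigfuns_nonpos[OF e, where ys' = "\<lambda>_. y'" and lam = "\<lambda>_. lam"])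
      (use C2 eq \<open>lam \<le> 0\<close> in simp_all)
  then have "cqform \<alpha> \<beta> e y y'' \<le> 0"
    by (simp add: lincomb_def)
  then have "cqform \<alpha> \<beta> e y y'' = 0"
    using cqform_nonneg_if_A_large(1)[OF e B A] by linarith
  then have "\<forall>t\<in>{0..2*pi}. y t = 0"
    by (rule cqform_nonneg_if_A_large(2)[OF e B A])
  then show ?thesis
    using outside by (cases "t \<in> {0..2*pi}") auto
qed

lemma indep_nonpos_eigfuns_eq_0:
  assumes e: "0 \<le> e" "e < 1"
    and B: "0 \<le> 1 + \<alpha> - 3 * \<beta>" "1 + \<alpha> - 3 * \<beta> < 1"
    and A: "(1 + \<alpha> - 3 * \<beta>) + 15/4 * (1 + e) * (1 - (1 + \<alpha> - 3 * \<beta>)) < 1 + \<alpha> + 3 * \<beta>"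
    and eig: "\<forall>i<n. \<exists>lam\<le>0. is_eigfun \<alpha> \<beta> e lam (ys i)" and indep: "cindep n ys"
  shows "n = 0"
proof (rule ccontr)
  assume "n \<noteq> 0"
  then obtain lam where "lam \<le> 0" "is_eigfun \<alpha> \<beta> e lam (ys 0)"
    using eig by blast
  then have "ys 0 t = 0" for t
    by (rule nonpos_eigfun_eq_0[OF e B A])
  moreover have "\<exists>t. ys 0 t \<noteq> 0"
    using indep \<open>n \<noteq> 0\<close> by (intro cindep_imp_nonzero) simp_all
  ultimately show False
    by simp
qed

lemma morse_index_nullity_le:
  assumes "\<And>n ys. \<forall>i<n. \<exists>lam\<le>0. is_eigfun \<alpha> \<beta> e lam (ys i) \<Longrightarrow> cindep n ys \<Longrightarrow> n \<le> k"
  shows "morse_index \<alpha> \<beta> e \<le> enat k" and "nullity \<alpha> \<beta> e \<le> enat k"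
proof -
  show "morse_index \<alpha> \<beta> e \<le> enat k"
    unfolding morse_index_def
  proof (rule Sup_least)
    fix x
    assume "x \<in> {enat n |n. \<exists>ys. (\<forall>i<n. \<exists>lam<0. is_eigfun \<alpha> \<beta> e lam (ys i)) \<and> cindep n ys}"
    then obtain n ys where "x = enat n" "\<forall>i<n. \<exists>lam<0. is_eigfun \<alpha> \<beta> e lam (ys i)" "cindep n ys"
      by blast
    moreover from this(2) have "\<forall>i<n. \<exists>lam\<le>0. is_eigfun \<alpha> \<beta> e lam (ys i)"
      using less_imp_le by blast
    ultimately show "x \<le> enat k"
      using assms by simp
  qed
  show "nullity \<alpha> \<beta> e \<le> enat k"
    unfolding nullity_def
  proof (rule Sup_least)
    fix x
    assume "x \<in> {enat n |n. \<exists>ys. (\<forall>i<n. is_eigfun \<alpha> \<beta> e 0 (ys i)) \<and> cindep n ys}"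
    then obtain n ys where "x = enat n" "\<forall>i<n. is_eigfun \<alpha> \<beta> e 0 (ys i)" "cindep n ys"
      by blast
    moreover from this(2) have "\<forall>i<n. \<exists>lam\<le>0. is_eigfun \<alpha> \<beta> e lam (ys i)"
      by blast
    ultimately show "x \<le> enat k"
      using assms by simp
  qed
qed

theorem morse_index_t_nullity_t_le_2:
  assumes "0 \<le> a_t" "-1 < b_t" "b_t \<le> 0" "0 \<le> e" "e < 1"
  shows "morse_index_t a_t b_t e \<le> 2 \<and> nullity_t a_t b_t e \<le> 2"
proof -
  let ?\<alpha> = "(3 * a_t + b_t + 1) / 2" and ?\<beta> = "(a_t + b_t + 1) / 2"
  have "0 \<le> 1 + ?\<alpha> - 3 * ?\<beta>" "1 + ?\<alpha> - 3 * ?\<beta> < 1" "?\<beta> \<le> ?\<alpha>"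
    using assms by (auto simp: field_simps)
  then have "n \<le> 2" if "\<forall>i<n. \<exists>lam\<le>0. is_eigfun ?\<alpha> ?\<beta> e lam (ys i)" "cindep n ys" for n ys
    using indep_nonpos_eigfuns_le_2 assms(4,5) that by blast
  from morse_index_nullity_le[OF this] show ?thesis
    by (simp add: morse_index_t_def nullity_t_def numeral_eq_enat)
qed

theorem morse_index_t_nullity_t_eq_0:
  assumes "0 \<le> e" "e < 1" "1/4 + 5/4 * e < a_t" "-1 < b_t" "b_t \<le> 0"
  shows "morse_index_t a_t b_t e = 0 \<and> nullity_t a_t b_t e = 0"
proof -
  let ?\<alpha> = "(3 * a_t + b_t + 1) / 2" and ?\<beta> = "(a_t + b_t + 1) / 2"
  have B: "0 \<le> 1 + ?\<alpha> - 3 * ?\<beta>" "1 + ?\<alpha> - 3 * ?\<beta> < 1"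
    using assms by (auto simp: field_simps)
  have "0 \<le> (- b_t) * (3/4 + 15/4 * e)"
    using assms by (intro mult_nonneg_nonneg) auto
  then have nonneg: "0 \<le> - (3/4) * b_t - 15/4 * (e * b_t)"
    by (simp add: algebra_simps)
  have "(1 + ?\<alpha> - 3 * ?\<beta>) + 15/4 * (1 + e) * (1 - (1 + ?\<alpha> - 3 * ?\<beta>))
      = - b_t + (15/4 + 15/4 * e + 15/4 * b_t + 15/4 * (e * b_t))"
    by (simp add: field_simps)
  also have "\<dots> < 3 + 3 * a_t + 2 * b_t"
    using nonneg assms(3) by linarith
  also have "\<dots> = 1 + ?\<alpha> + 3 * ?\<beta>"
    by (simp add: field_simps)
  finally have A: "(1 + ?\<alpha> - 3 * ?\<beta>) + 15/4 * (1 + e) * (1 - (1 + ?\<alpha> - 3 * ?\<beta>))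
      < 1 + ?\<alpha> + 3 * ?\<beta>" .
  have "n \<le> 0" if "\<forall>i<n. \<exists>lam\<le>0. is_eigfun ?\<alpha> ?\<beta> e lam (ys i)" "cindep n ys" for n ys
    using indep_nonpos_eigfuns_eq_0[OF assms(1,2) B A that] by simp
  from morse_index_nullity_le[OF this] show ?thesis
    by (simp add: morse_index_t_def nullity_t_def zero_enat_def[symmetric])
qed

theorem proposition6p3:
  shows "(\<forall>a_t b_t e :: real. a_t \<ge> 0 \<and> -1 < b_t \<and> b_t \<le> 0 \<and> 0 \<le> e \<and> e < 1 \<longrightarrow>
            morse_index_t a_t b_t e \<le> 2 \<and> nullity_t a_t b_t e \<le> 2) \<and>
         (\<forall>a_t b_t e0 :: real. 0 \<le> e0 \<and> e0 < 1 \<and> a_t > 1/4 + 5/4 * e0 \<and> -1 < b_t \<and> b_t \<le> 0 \<longrightarrow>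
            morse_index_t a_t b_t e0 = 0 \<and> nullity_t a_t b_t e0 = 0)"
  using morse_index_t_nullity_t_le_2 morse_index_t_nullity_t_eq_0 by blast

end
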